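(* Let $k\in\mathbb{N}$, $n>2k$, and $q^*(k)=\frac{(n+2)k}{n-2k}$. Consider the problem \[ S_k(D^2u)=\lambda(1-u)^{q^*(k)}\ \text{in } B,\qquad u<0\ \text{in } B,\qquad u=0\ \text{on }\partial B, \] and set $\mu^*(k)=\dfrac{\binom{n}{k}\left(\frac{n-2k}{k}\right)^k k^k}{(k+1)^{k+1}}$. \begin{itemize} \item[(i)] If $\lambda\in(0,\mu^*(k))$, the equation $\lambda(d+1)^{k+1}-\binom{n}{k}\left(\frac{n-2k}{k}\right)^k d^k=0$ has exactly two positive roots $d_-(\lambda)<d_+(\lambda)$, and the problem has exactly two radially symmetric solutions, given by \[ u_\lambda(x)=1-\lambda^{-\frac{n-2k}{2k(k+1)}}\big(-w_{d_-(\lambda)}(x)\big),\qquad U_\lambda(x)=1-\lambda^{-\frac{n-2k}{2k(k+1)}}\big(-w_{d_+(\lambda)}(x)\big),\quad x\in B. \] \item[(ii)] If $\lambda=\mu^*(k)$, the problem has a unique radially symmetric solution, given by \[ u^*(x)=1-(\mu^*(k))^{-\frac{n-2k}{2k(k+1)}}\big(-w_k(x)\big)=1-\left(\frac{1+k}{1+k|x|^2}\right)^{\frac{n-2k}{2k}},\quad x\in B. \] \end{itemize}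
   Context: $B$ is the unit ball of $\mathbb{R}^n$; $S_k(D^2u)$ denotes the $k$-th elementary symmetric polynomial of the eigenvalues of the Hessian $D^2u$; solutions are understood in the class $\{u\in C^2(B)\cap C(\overline B): S_i(D^2u)\ge0 \text{ in } B,\ i=1,\dots,k\}$. For $d>0$ the Bliss function $w_d$ is \[ w_d(x)=-\frac{\left[d\binom{n}{k}^{1/k}\left(\frac{n-2k}{k}\right)\right]^{\frac{n-2k}{2(k+1)}}}{(1+d|x|^2)^{\frac{n-2k}{2k}}},\quad x\in\mathbb{R}^n. \] *)

theory Defs
  imports "HOL-Analysis.Analysis"
begin

definition pderiv1 :: "'n::finite \<Rightarrow> (real^'n \<Rightarrow> real) \<Rightarrow> real^'n \<Rightarrow> real" where
  "pderiv1 j u x = frechet_derivative u (at x) (axis j 1)"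

definition hessian :: "(real^'n::finite \<Rightarrow> real) \<Rightarrow> real^'n \<Rightarrow> real^'n^'n" where
  "hessian u x = (\<chi> i j. frechet_derivative (pderiv1 j u) (at x) (axis i 1))"

definition C2_on :: "(real^'n::finite) set \<Rightarrow> (real^'n \<Rightarrow> real) \<Rightarrow> bool" where
  "C2_on S u \<longleftrightarrow>
     (\<forall>x\<in>S. u differentiable (at x)) \<and>
     (\<forall>j. \<forall>x\<in>S. pderiv1 j u differentiable (at x)) \<and>
     (\<forall>i j. continuous_on S (\<lambda>x. hessian u x $ i $ j))"

definition eigvals_sym :: "real^'n::finite^'n \<Rightarrow> ('n \<Rightarrow> real)" where
  "eigvals_sym A = (SOME ev. \<exists>P. orthogonal_matrix P \<and>
       A = P ** (\<chi> i j. if i = j then ev i else 0) ** transpose P)"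

definition elem_sym :: "nat \<Rightarrow> ('n::finite \<Rightarrow> real) \<Rightarrow> real" where
  "elem_sym k ev = (\<Sum>I \<in> {I. card I = k}. \<Prod>i\<in>I. ev i)"

definition S_k :: "nat \<Rightarrow> real^'n::finite^'n \<Rightarrow> real" where
  "S_k k A = elem_sym k (eigvals_sym A)"

(* Bliss function w_d on R^n, n = CARD('n) *)
definition bliss :: "nat \<Rightarrow> real \<Rightarrow> real^'n::finite \<Rightarrow> real" where
  "bliss k d x =
     (let n = real CARD('n) in
      - ((d * (real (CARD('n) choose k)) powr (1 / real k) * ((n - 2 * real k) / real k))
           powr ((n - 2 * real k) / (2 * (real k + 1))))
      / (1 + d * (norm x)^2) powr ((n - 2 * real k) / (2 * real k)))"

definition qstar :: "'n::finite itself \<Rightarrow> nat \<Rightarrow> real" where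
  "qstar _ k = (real CARD('n) + 2) * real k / (real CARD('n) - 2 * real k)"

definition mustar :: "'n::finite itself \<Rightarrow> nat \<Rightarrow> real" where
  "mustar _ k = real (CARD('n) choose k) * ((real CARD('n) - 2 * real k) / real k) ^ k
                 * real k ^ k / (real k + 1) ^ (k + 1)"

definition is_solution :: "nat \<Rightarrow> real \<Rightarrow> (real^'n::finite \<Rightarrow> real) \<Rightarrow> bool" where
  "is_solution k lam u \<longleftrightarrow>
     C2_on (ball 0 1) u \<and> continuous_on (cball 0 1) u \<and>
     (\<forall>i\<in>{1..k}. \<forall>x\<in>ball 0 1. S_k i (hessian u x) \<ge> 0) \<and>
     (\<forall>x\<in>ball 0 1. S_k k (hessian u x) = lam * (1 - u x) powr qstar TYPE('n) k) \<and>
     (\<forall>x\<in>ball 0 1. u x < 0) \<and>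
     (\<forall>x\<in>sphere 0 1. u x = 0)"

definition radial :: "(real^'n::finite \<Rightarrow> real) \<Rightarrow> bool" where
  "radial u \<longleftrightarrow> (\<exists>\<phi>. \<forall>x\<in>cball 0 1. u x = \<phi> (norm x))"

end

theory Submission
  imports Defs "HOL-Computational_Algebra.Polynomial"
begin

text \<open>For \<open>u(x) = \<phi>(|x|)\<close> the Hessian \<open>D\<^sup>2u\<close> has the eigenvalue \<open>\<phi>''\<close> once and \<open>\<phi>'/r\<close> with
  multiplicity \<open>n - 1\<close>, so the equation becomes an ODE in divergence form,
  \<open>(r^(n-k) \<phi>'^k)' = c r^(n-1) (1 - \<phi>)^q\<close>. Integrating it from the singular point \<open>r = 0\<close>
  gives a Gronwall-type estimate showing that a radial solution is determined by \<open>\<phi>(0)\<close>.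
  The rescaled Bliss functions \<open>1 - \<lambda>^(-(n-2k)/(2k(k+1))) (-w\<^sub>d)\<close> solve the equation for
  every \<open>d > 0\<close> and realise every value at the origin, so every radial solution is one of
  them, and the boundary condition singles out exactly the \<open>d\<close> with
  \<open>\<lambda> = C d^k / (d + 1)^(k+1)\<close>, \<open>C = binom(n,k) ((n-2k)/k)^k\<close>. The right-hand side increases on
  \<open>(0, k)\<close>, decreases to \<open>0\<close> on \<open>(k, \<infinity>)\<close> and takes its maximum \<open>\<mu>*(k)\<close> at \<open>d = k\<close>,
  which gives two roots for \<open>\<lambda> < \<mu>*(k)\<close> and one for \<open>\<lambda> = \<mu>*(k)\<close>.\<close>

section \<open>Elementary symmetric functions of conjugated diagonal matrices\<close>

definition diag_mat :: "('n::finite \<Rightarrow> real) \<Rightarrow> real^'n^'n" where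
  "diag_mat e = (\<chi> i j. if i = j then e i else 0)"

lemma prod_add_eq_sum_elem_sym:
  fixes e :: "'n::finite \<Rightarrow> real"
  shows "(\<Prod>i\<in>UNIV. t + e i) = (\<Sum>j\<le>CARD('n). elem_sym j e * t ^ (CARD('n) - j))"
proof -
  have "(\<Prod>i\<in>UNIV. t + e i) = (\<Sum>X\<in>Pow UNIV. (\<Prod>x\<in>X. e x) * (\<Prod>x\<in>UNIV-X. t))"
    by (subst prod_add[symmetric]) (simp_all add: add.commute)
  also have "\<dots> = (\<Sum>X\<in>Pow UNIV. (\<Prod>x\<in>X. e x) * t ^ (CARD('n) - card X))"
    by (intro sum.cong refl) (simp add: card_Diff_subset)
  also have "\<dots> = (\<Sum>j\<le>CARD('n). \<Sum>X\<in>{X\<in>Pow UNIV. card X = j}. (\<Prod>x\<in>X. e x) * t ^ (CARD('n) - card X))"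
    by (rule sum.group[symmetric]) (auto simp: card_mono)
  also have "\<dots> = (\<Sum>j\<le>CARD('n). elem_sym j e * t ^ (CARD('n) - j))"
    unfolding elem_sym_def sum_distrib_right by (intro sum.cong refl) auto
  finally show ?thesis .
qed

lemma elem_sym_eq_0_if_gt_card:
  fixes e :: "'n::finite \<Rightarrow> real"
  assumes "j > CARD('n)"
  shows "elem_sym j e = 0"
proof -
  have "card I \<le> CARD('n)" for I :: "'n set"
    by (rule card_mono) auto
  then have "{I::'n set. card I = j} = {}"
    using assms by (auto simp: not_le[symmetric])
  then show ?thesis
    by (simp add: elem_sym_def)
qed

lemma elem_sym_eqI:
  fixes e f :: "'n::finite \<Rightarrow> real"
  assumes "\<And>t. (\<Prod>i\<in>UNIV. t + e i) = (\<Prod>i\<in>UNIV. t + f i)"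
  shows "elem_sym j e = elem_sym j f"
proof (cases "j \<le> CARD('n)")
  case False
  then show ?thesis by (simp add: elem_sym_eq_0_if_gt_card)
next
  case True
  define P where "P g = (\<Sum>j\<le>CARD('n). monom (elem_sym j g) (CARD('n) - j))" for g :: "'n \<Rightarrow> real"
  have coeff_P: "coeff (P g) (CARD('n) - j) = elem_sym j g" for g
  proof -
    have "coeff (P g) (CARD('n) - j) = (\<Sum>i\<le>CARD('n). if CARD('n) - i = CARD('n) - j then elem_sym i g else 0)"
      by (simp add: P_def coeff_sum)
    also have "\<dots> = (\<Sum>i\<in>{j}. elem_sym i g)"
      by (rule sum.mono_neutral_cong_right) (use True in auto)
    finally show ?thesis by simp
  qed
  have "poly (P g) t = (\<Prod>i\<in>UNIV. t + g i)" for g t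
    by (simp add: P_def prod_add_eq_sum_elem_sym poly_sum poly_monom)
  then have "poly (P e) = poly (P f)"
    using assms by auto
  then have "P e = P f"
    by (simp add: poly_eq_poly_eq_iff)
  then show ?thesis
    by (metis coeff_P)
qed

lemma diag_mat_conj_nth:
  fixes P :: "real^'n::finite^'n"
  shows "(P ** diag_mat e ** transpose P) $ i $ j = (\<Sum>l\<in>UNIV. P$i$l * e l * P$j$l)"
  by (simp add: matrix_matrix_mult_def diag_mat_def transpose_def sum_distrib_right if_distrib
      cong: if_cong)

lemma orthogonal_matrix_rows_orthonormal:
  fixes P :: "real^'n::finite^'n"
  assumes "orthogonal_matrix P"
  shows "(\<Sum>l\<in>UNIV. P$i$l * P$j$l) = (if i = j then 1 else 0)"
proof -
  have "(P ** transpose P) $ i $ j = mat 1 $ i $ j"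
    using assms by (simp add: orthogonal_matrix_def)
  then show ?thesis
    by (simp add: matrix_matrix_mult_def transpose_def mat_def)
qed

lemma det_mat_add_orthogonal_conj:
  fixes P :: "real^'n::finite^'n"
  assumes P: "orthogonal_matrix P"
  shows "det (mat t + P ** diag_mat e ** transpose P) = (\<Prod>i\<in>UNIV. t + e i)"
proof -
  have "mat t + P ** diag_mat e ** transpose P = P ** diag_mat (\<lambda>i. t + e i) ** transpose P"
  proof (intro vec_eq_iff[THEN iffD2] allI)
    fix i j
    have "(\<Sum>l\<in>UNIV. P$i$l * (t + e l) * P$j$l) = t * (\<Sum>l\<in>UNIV. P$i$l * P$j$l) + (\<Sum>l\<in>UNIV. P$i$l * e l * P$j$l)"
      by (simp add: sum_distrib_left algebra_simps sum.distrib)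
    then show "(mat t + P ** diag_mat e ** transpose P) $ i $ j = (P ** diag_mat (\<lambda>i. t + e i) ** transpose P) $ i $ j"
      by (simp add: diag_mat_conj_nth orthogonal_matrix_rows_orthonormal[OF P] mat_def)
  qed
  also have "det \<dots> = det P * det (diag_mat (\<lambda>i. t + e i)) * det P"
    by (simp add: det_mul)
  also have "det (diag_mat (\<lambda>i. t + e i)) = (\<Prod>i\<in>UNIV. t + e i)"
    by (subst det_diagonal) (auto simp: diag_mat_def)
  finally show ?thesis
    using det_orthogonal_matrix[OF P] by auto
qed

lemma S_k_orthogonal_conj:
  fixes P :: "real^'n::finite^'n"
  assumes P: "orthogonal_matrix P" and A: "A = P ** diag_mat e ** transpose P"
  shows "S_k j A = elem_sym j e"
proof -
  have "\<exists>ev Q. orthogonal_matrix Q \<and> A = Q ** (\<chi> i j. if i = j then ev i else 0) ** transpose Q"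
    using assms unfolding diag_mat_def by blast
  from someI_ex[OF this] obtain Q where Q: "orthogonal_matrix Q"
    and QA: "A = Q ** diag_mat (eigvals_sym A) ** transpose Q"
    unfolding eigvals_sym_def diag_mat_def by blast
  have "det (mat t + A) = (\<Prod>i\<in>UNIV. t + eigvals_sym A i)" for t
    using det_mat_add_orthogonal_conj[OF Q] QA by metis
  moreover have "det (mat t + A) = (\<Prod>i\<in>UNIV. t + e i)" for t
    unfolding A by (rule det_mat_add_orthogonal_conj[OF P])
  ultimately show ?thesis
    unfolding S_k_def by (metis elem_sym_eqI)
qed

lemma card_subsets_containing:
  fixes i0 :: "'n::finite"
  assumes "j \<ge> 1"
  shows "card {I\<in>{I::'n set. card I = j}. i0 \<in> I} = (CARD('n) - 1) choose (j - 1)"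
proof -
  let ?S = "{I::'n set. card I = j}"
  let ?M = "{I\<in>?S. i0 \<in> I}"
  let ?N = "{I. I \<subseteq> UNIV - {i0} \<and> card I = j}"
  have "card ?S = card (?M \<union> ?N)"
    by (intro arg_cong[where f = card]) auto
  also have "\<dots> = card ?M + card ?N"
    by (rule card_Un_disjoint) auto
  finally have "card ?S = card ?M + card ?N" .
  moreover have "card ?S = CARD('n) choose j" "card ?N = (CARD('n) - 1) choose j"
    using n_subsets[of "UNIV::'n set" j] n_subsets[of "UNIV - {i0}" j] by simp_all
  moreover have "CARD('n) choose j = ((CARD('n) - 1) choose j) + ((CARD('n) - 1) choose (j - 1))"
    using assms choose_reduce_nat[of "CARD('n)" j] by simp
  ultimately show ?thesis
    by linarith
qed

lemma elem_sym_perturb_one: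
  fixes i0 :: "'n::finite"
  assumes "j \<ge> 1"
  shows "elem_sym j (\<lambda>i. if i = i0 then a + g else a)
       = real (CARD('n) choose j) * a ^ j + real ((CARD('n) - 1) choose (j - 1)) * a ^ (j - 1) * g"
proof -
  let ?S = "{I::'n set. card I = j}"
  have prod_eq: "(\<Prod>i\<in>I. if i = i0 then a + g else a) = a ^ j + (if i0 \<in> I then a ^ (j - 1) * g else 0)"
    if "I \<in> ?S" for I
  proof (cases "i0 \<in> I")
    case True
    have "(\<Prod>i\<in>I. if i = i0 then a + g else a) = (a + g) * (\<Prod>i\<in>I - {i0}. if i = i0 then a + g else a)"
      using True by (simp add: prod.remove)
    also have "(\<Prod>i\<in>I - {i0}. if i = i0 then a + g else a) = (\<Prod>i\<in>I - {i0}. a)"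
      by (rule prod.cong) auto
    also have "\<dots> = a ^ (j - 1)"
      using that True by simp
    moreover obtain l where "j = Suc l"
      using assms by (cases j) auto
    ultimately show ?thesis
      using True by (simp add: algebra_simps)
  next
    case False
    have "(\<Prod>i\<in>I. if i = i0 then a + g else a) = (\<Prod>i\<in>I. a)"
      by (rule prod.cong) (use False in auto)
    then show ?thesis
      using that False by simp
  qed
  have "elem_sym j (\<lambda>i. if i = i0 then a + g else a) = (\<Sum>I\<in>?S. a ^ j + (if i0 \<in> I then a ^ (j - 1) * g else 0))"
    unfolding elem_sym_def by (rule sum.cong) (use prod_eq in auto)
  also have "\<dots> = real (card ?S) * a ^ j + real (card {I\<in>?S. i0 \<in> I}) * (a ^ (j - 1) * g)"
    by (simp add: sum.distrib sum.If_cases Int_def)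
  also have "\<dots> = real (CARD('n) choose j) * a ^ j + real ((CARD('n) - 1) choose (j - 1)) * (a ^ (j - 1) * g)"
    using n_subsets[of "UNIV::'n set" j] by (simp only: card_subsets_containing[OF assms]) simp
  finally show ?thesis
    by (simp add: mult_ac)
qed

text \<open>A Householder reflection in the direction \<open>e + axis i0 1\<close>.\<close>
lemma orthogonal_matrix_with_column:
  fixes e :: "real^'n::finite"
  assumes "norm e = 1" "e $ i0 \<ge> 0"
  shows "\<exists>P. orthogonal_matrix P \<and> (\<forall>i. P$i$i0 = - e$i)"
proof -
  define v where "v = e + axis i0 1"
  have e_axis: "e \<bullet> axis i0 1 = e$i0" "axis i0 1 \<bullet> e = e$i0"
    by (simp_all add: inner_axis inner_commute)
  have "e \<bullet> e = 1"
    using assms by (simp add: dot_square_norm)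
  then have vv: "v \<bullet> v = 2 + 2 * e$i0"
    by (simp add: v_def inner_add_left inner_add_right e_axis)
  then have vpos: "v \<bullet> v > 0"
    using assms by simp
  define P :: "real^'n^'n" where "P = (\<chi> i j. (if i = j then 1 else 0) - 2 * v$i * v$j / (v \<bullet> v))"
  have vs: "(\<Sum>l\<in>UNIV. v$l * v$l) = v \<bullet> v"
    by (simp add: inner_vec_def)
  have "transpose P ** P = mat 1"
  proof (intro vec_eq_iff[THEN iffD2] allI)
    fix i j
    have "(transpose P ** P) $ i $ j = (\<Sum>l\<in>UNIV. (if l = i then (if l = j then 1 else 0) else 0)
        - (if l = i then (2 * v$l * v$j / (v \<bullet> v)) else 0)
        - (if l = j then (2 * v$l * v$i / (v \<bullet> v)) else 0)
        + (4 * v$i * v$j / (v \<bullet> v)^2) * (v$l * v$l))"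
      unfolding matrix_matrix_mult_def transpose_def
      by (auto intro!: sum.cong simp: P_def algebra_simps power2_eq_square)
    also have "\<dots> = (if i = j then 1 else 0) - 2 * v$i * v$j / (v \<bullet> v) - 2 * v$j * v$i / (v \<bullet> v)
        + (4 * v$i * v$j / (v \<bullet> v)^2) * (v \<bullet> v)"
      by (simp only: sum.distrib sum_subtractf sum.delta finite UNIV_I if_True vs
          flip: sum_distrib_left)
    also have "\<dots> = mat 1 $ i $ j"
      using vpos by (simp add: field_simps power2_eq_square mat_def)
    finally show "(transpose P ** P) $ i $ j = mat 1 $ i $ j" .
  qed
  then have "orthogonal_matrix P"
    by (simp add: orthogonal_matrix)
  moreover have "P$i$i0 = - e$i" for i
  proof -
    have "v$i0 = e$i0 + 1"
      by (simp add: v_def)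
    then have "P$i$i0 = (if i = i0 then 1 else 0) - v$i"
      using vpos by (simp add: P_def vv field_simps)
    then show ?thesis
      by (simp add: v_def axis_def)
  qed
  ultimately show ?thesis
    by blast
qed

lemma orthogonal_matrix_column_outer:
  fixes x :: "real^'n::finite"
  obtains P where "orthogonal_matrix P" "\<And>i j. P$i$i0 * P$j$i0 * (x \<bullet> x) = x$i * x$j"
proof (cases "x = 0")
  case True
  then show ?thesis
    using that[of "mat 1"] orthogonal_matrix_id by (simp add: mat_def)
next
  case False
  define e where "e = (if x$i0 \<ge> 0 then 1 else -1) * (1 / norm x) *\<^sub>R x"
  have "norm e = 1" "e$i0 \<ge> 0"
    using False by (auto simp: e_def)
  then obtain P where "orthogonal_matrix P" "\<forall>i. P$i$i0 = - e$i"
    using orthogonal_matrix_with_column by blast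
  moreover have "e$i * e$j * (x \<bullet> x) = x$i * x$j" for i j
    using False by (simp add: e_def dot_square_norm power2_eq_square field_simps)
  ultimately show ?thesis
    using that by auto
qed

definition id_plus_outer :: "real \<Rightarrow> real \<Rightarrow> real^'n::finite \<Rightarrow> real^'n^'n" where
  "id_plus_outer a b x = (\<chi> i j. (if i = j then a else 0) + b * x$i * x$j)"

text \<open>The eigenvalues of \<open>a I + b x x\<^sup>T\<close> are \<open>a + b |x|\<^sup>2\<close> once and \<open>a\<close> with multiplicity \<open>n - 1\<close>.\<close>
lemma S_k_id_plus_outer:
  fixes x :: "real^'n::finite"
  assumes "j \<ge> 1"
  shows "S_k j (id_plus_outer a b x)
       = real (CARD('n) choose j) * a ^ j + real ((CARD('n) - 1) choose (j - 1)) * a ^ (j - 1) * (b * (x \<bullet> x))"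
proof -
  obtain i0 :: 'n where True by blast
  obtain P where P: "orthogonal_matrix P" and P_col: "\<And>i j. P$i$i0 * P$j$i0 * (x \<bullet> x) = x$i * x$j"
    using orthogonal_matrix_column_outer by blast
  define ev where "ev = (\<lambda>i. if i = i0 then a + b * (x \<bullet> x) else a)"
  have "id_plus_outer a b x = P ** diag_mat ev ** transpose P"
  proof (intro vec_eq_iff[THEN iffD2] allI)
    fix i j
    have "(\<Sum>l\<in>UNIV. P$i$l * ev l * P$j$l) = (\<Sum>l\<in>UNIV. a * (P$i$l * P$j$l)
           + (if l = i0 then b * (x \<bullet> x) * (P$i$i0 * P$j$i0) else 0))"
      by (rule sum.cong) (auto simp: ev_def algebra_simps)
    also have "\<dots> = (if i = j then a else 0) + b * x$i * x$j"
      using P_col[of i j]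
      by (simp add: sum.distrib orthogonal_matrix_rows_orthonormal[OF P] field_simps
          flip: sum_distrib_left)
    finally show "id_plus_outer a b x $ i $ j = (P ** diag_mat ev ** transpose P) $ i $ j"
      by (simp add: diag_mat_conj_nth id_plus_outer_def)
  qed
  then have "S_k j (id_plus_outer a b x) = elem_sym j ev"
    by (rule S_k_orthogonal_conj[OF P])
  then show ?thesis
    unfolding ev_def by (simp add: elem_sym_perturb_one[OF assms])
qed

section \<open>Hessians of radial functions\<close>

lemma has_derivative_vec_nth: "((\<lambda>y::real^'n::finite. y $ j) has_derivative (\<lambda>h. h $ j)) F"
  by (rule bounded_linear_imp_has_derivative) (rule bounded_linear_vec_nth)

lemma has_derivative_comp_inner_self:
  assumes "(g has_real_derivative g') (at (x \<bullet> x))"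
  shows "((\<lambda>y::real^'n::finite. g (y \<bullet> y)) has_derivative (\<lambda>h. g' * (2 * (x \<bullet> h)))) (at x)"
proof -
  have "((\<lambda>y::real^'n. y \<bullet> y) has_derivative (\<lambda>h. x \<bullet> h + h \<bullet> x)) (at x)"
    by (intro derivative_eq_intros) auto
  then have "((\<lambda>y::real^'n. y \<bullet> y) has_derivative (\<lambda>h. 2 * (x \<bullet> h))) (at x)"
    by (simp add: inner_commute)
  from has_derivative_compose[OF this has_field_derivative_imp_has_derivative[OF assms]]
  show ?thesis .
qed

lemma hessian_comp_inner_self:
  fixes g g' g'' :: "real \<Rightarrow> real"
  assumes g': "\<And>s. s \<ge> 0 \<Longrightarrow> (g has_real_derivative g' s) (at s)"
    and g'': "\<And>s. s \<ge> 0 \<Longrightarrow> (g' has_real_derivative g'' s) (at s)"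
  defines "u \<equiv> (\<lambda>x::real^'n::finite. g (x \<bullet> x))"
  shows "u differentiable (at x)"
    and "pderiv1 j u differentiable (at x)"
    and "hessian u x = id_plus_outer (2 * g' (x \<bullet> x)) (4 * g'' (x \<bullet> x)) x"
proof -
  have du: "(u has_derivative (\<lambda>h. g' (y \<bullet> y) * (2 * (y \<bullet> h)))) (at y)" for y
    unfolding u_def by (rule has_derivative_comp_inner_self[OF g']) simp
  then show "u differentiable (at x)"
    by (auto simp: differentiable_def)
  have pderiv: "pderiv1 j u = (\<lambda>y. 2 * g' (y \<bullet> y) * y $ j)" for j
    by (rule ext) (simp add: pderiv1_def frechet_derivative_at[OF du, symmetric] cart_eq_inner_axis)
  have dpderiv: "(pderiv1 j u has_derivative
      (\<lambda>h. 2 * (g'' (x \<bullet> x) * (2 * (x \<bullet> h))) * x $ j + 2 * g' (x \<bullet> x) * h $ j)) (at x)" for j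
  proof -
    have "((\<lambda>y. g' (y \<bullet> y)) has_derivative (\<lambda>h. g'' (x \<bullet> x) * (2 * (x \<bullet> h)))) (at x)"
      by (rule has_derivative_comp_inner_self[OF g'']) simp
    then show ?thesis
      unfolding pderiv
      by (intro derivative_eq_intros has_derivative_vec_nth)
        (auto simp: algebra_simps intro: has_derivative_vec_nth)
  qed
  then show "pderiv1 j u differentiable (at x)"
    by (auto simp: differentiable_def)
  have "x \<bullet> axis i 1 = x$i" for i
    by (simp add: cart_eq_inner_axis)
  then show "hessian u x = id_plus_outer (2 * g' (x \<bullet> x)) (4 * g'' (x \<bullet> x)) x"
    by (simp add: hessian_def id_plus_outer_def frechet_derivative_at[OF dpderiv, symmetric]
        vec_eq_iff axis_def)
qed

lemma has_derivative_norm_nonzero: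
  fixes x :: "real^'n::finite"
  assumes "x \<noteq> 0"
  shows "(norm has_derivative (\<lambda>h. (x \<bullet> h) / norm x)) (at x)"
proof -
  have "(\<lambda>h. h \<bullet> sgn x) = (\<lambda>h. (x \<bullet> h) / norm x)"
    by (auto simp: sgn_div_norm inner_commute divide_inverse)
  then show ?thesis
    using has_derivative_norm[OF assms] by simp
qed

lemma has_derivative_radial:
  fixes u :: "real^'n::finite \<Rightarrow> real"
  assumes u: "\<forall>x\<in>ball 0 1. u x = \<phi> (norm x)"
    and \<phi>': "\<And>t. t \<in> {0<..<1} \<Longrightarrow> (\<phi> has_real_derivative \<phi>' t) (at t)"
    and y: "y \<in> ball 0 1" "y \<noteq> 0"
  shows "(u has_derivative (\<lambda>h. \<phi>' (norm y) * ((y \<bullet> h) / norm y))) (at y)"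
proof -
  have "((\<lambda>z. \<phi> (norm z)) has_derivative (\<lambda>h. \<phi>' (norm y) * ((y \<bullet> h) / norm y))) (at y)"
    using has_derivative_compose[OF has_derivative_norm_nonzero[OF y(2)]
        has_field_derivative_imp_has_derivative[OF \<phi>'[of "norm y"]]] y
    by (simp add: mult.commute)
  then show ?thesis
    by (rule has_derivative_transform_within_open[of _ _ _ _ "ball 0 1"]) (use y u in auto)
qed

lemma pderiv1_radial:
  fixes u :: "real^'n::finite \<Rightarrow> real"
  assumes "\<forall>x\<in>ball 0 1. u x = \<phi> (norm x)"
    and "\<And>t. t \<in> {0<..<1} \<Longrightarrow> (\<phi> has_real_derivative \<phi>' t) (at t)"
    and "y \<in> ball 0 1" "y \<noteq> 0"
  shows "pderiv1 j u y = \<phi>' (norm y) * y $ j / norm y"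
proof -
  have "frechet_derivative u (at y) = (\<lambda>h. \<phi>' (norm y) * ((y \<bullet> h) / norm y))"
    using frechet_derivative_at[OF has_derivative_radial[OF assms]] by simp
  then show ?thesis
    by (simp add: pderiv1_def cart_eq_inner_axis)
qed

lemma hessian_radial:
  fixes u :: "real^'n::finite \<Rightarrow> real"
  assumes u: "\<forall>x\<in>ball 0 1. u x = \<phi> (norm x)"
    and \<phi>': "\<And>t. t \<in> {0<..<1} \<Longrightarrow> (\<phi> has_real_derivative \<phi>' t) (at t)"
    and \<phi>'': "\<And>t. t \<in> {0<..<1} \<Longrightarrow> (\<phi>' has_real_derivative \<phi>'' t) (at t)"
    and x: "x \<in> ball 0 1" "x \<noteq> 0"
  shows "hessian u x = id_plus_outer (\<phi>' (norm x) / norm x)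
           ((\<phi>'' (norm x) - \<phi>' (norm x) / norm x) / (norm x)\<^sup>2) x"
proof -
  let ?r = "norm x"
  have r: "?r > 0" "?r < 1"
    using x by auto
  have dpderiv: "(pderiv1 j u has_derivative
     (\<lambda>h. \<phi>'' ?r * ((x \<bullet> h) / ?r) * (x $ j / ?r) + \<phi>' ?r * ((h $ j * ?r - x $ j * ((x \<bullet> h) / ?r)) / ?r\<^sup>2))) (at x)" for j
  proof -
    have "((\<lambda>z. \<phi>' (norm z)) has_derivative (\<lambda>h. \<phi>'' ?r * ((x \<bullet> h) / ?r))) (at x)"
      using has_derivative_compose[OF has_derivative_norm_nonzero[OF x(2)]
          has_field_derivative_imp_has_derivative[OF \<phi>''[of ?r]]] r
      by (simp add: mult.commute)
    moreover have "((\<lambda>z. z $ j / norm z) has_derivative (\<lambda>h. (h $ j * ?r - x $ j * ((x \<bullet> h) / ?r)) / ?r\<^sup>2)) (at x)"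
      using has_derivative_divide[OF has_derivative_vec_nth has_derivative_norm_nonzero[OF x(2)]] r
      by (simp add: power2_eq_square field_simps)
    ultimately have "((\<lambda>z. \<phi>' (norm z) * (z $ j / norm z)) has_derivative
        (\<lambda>h. \<phi>'' ?r * ((x \<bullet> h) / ?r) * (x $ j / ?r) + \<phi>' ?r * ((h $ j * ?r - x $ j * ((x \<bullet> h) / ?r)) / ?r\<^sup>2))) (at x)"
      by (auto dest: has_derivative_mult simp: add.commute)
    then show ?thesis
      by (rule has_derivative_transform_within_open[of _ _ _ _ "ball 0 1 - {0}"])
        (use x pderiv1_radial[OF u \<phi>'] in \<open>auto simp: mult.assoc\<close>)
  qed
  have "x \<bullet> axis i 1 = x$i" for i
    by (simp add: cart_eq_inner_axis)
  then show ?thesis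
    using r by (simp add: hessian_def id_plus_outer_def frechet_derivative_at[OF dpderiv, symmetric]
        vec_eq_iff axis_def power2_eq_square field_simps)
qed

lemma S_k_hessian_radial:
  fixes u :: "real^'n::finite \<Rightarrow> real"
  assumes k: "1 \<le> k" and u: "\<forall>x\<in>ball 0 1. u x = \<phi> (norm x)"
    and \<phi>': "\<And>t. t \<in> {0<..<1} \<Longrightarrow> (\<phi> has_real_derivative \<phi>' t) (at t)"
    and \<phi>'': "\<And>t. t \<in> {0<..<1} \<Longrightarrow> (\<phi>' has_real_derivative \<phi>'' t) (at t)"
    and x: "x \<in> ball 0 1" "x \<noteq> 0"
  defines "r \<equiv> norm x"
  shows "S_k k (hessian u x) = real (CARD('n) choose k) * (\<phi>' r / r) ^ k
           + real ((CARD('n) - 1) choose (k - 1)) * (\<phi>' r / r) ^ (k - 1) * (\<phi>'' r - \<phi>' r / r)"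
proof -
  have "hessian u x = id_plus_outer (\<phi>' r / r) ((\<phi>'' r - \<phi>' r / r) / r\<^sup>2) x"
    using hessian_radial[OF u \<phi>' \<phi>'' x] by (simp add: r_def)
  moreover have "x \<bullet> x = r\<^sup>2" "r > 0"
    using x by (simp_all add: r_def power2_norm_eq_inner)
  ultimately show ?thesis
    by (simp add: S_k_id_plus_outer[OF k])
qed

lemma has_real_derivative_along_line:
  assumes "f differentiable (at (t *\<^sub>R e))"
  shows "((\<lambda>s. f (s *\<^sub>R e)) has_real_derivative frechet_derivative f (at (t *\<^sub>R e)) e) (at t)"
proof -
  let ?f' = "frechet_derivative f (at (t *\<^sub>R e))"
  have f': "(f has_derivative ?f') (at (t *\<^sub>R e))"
    using assms by (simp add: frechet_derivative_works[symmetric])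
  have "((\<lambda>s. s *\<^sub>R e) has_derivative (\<lambda>h. h *\<^sub>R e)) (at t)"
    by (intro derivative_eq_intros) auto
  from has_derivative_compose[OF this f']
  have "((\<lambda>s. f (s *\<^sub>R e)) has_derivative (\<lambda>h. ?f' (h *\<^sub>R e))) (at t)" .
  moreover have "?f' (h *\<^sub>R e) = ?f' e * h" for h
    using linear_cmul[OF has_derivative_linear[OF f']] by simp
  ultimately show ?thesis
    by (simp add: has_field_derivative_def mult_commute_abs)
qed

section \<open>The radial equation\<close>

text \<open>Besides the equation, the bound on \<open>\<phi>'\<close> near \<open>0\<close> and the two sign conditions are what a
  radial solution of the boundary value problem provides.\<close>
definition radial_ode ::
    "nat \<Rightarrow> nat \<Rightarrow> real \<Rightarrow> real \<Rightarrow> (real \<Rightarrow> real) \<Rightarrow> (real \<Rightarrow> real) \<Rightarrow> (real \<Rightarrow> real) \<Rightarrow> bool" where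
  "radial_ode n k lam q \<phi> \<phi>' \<phi>'' \<longleftrightarrow>
     continuous_on {0..1} \<phi> \<and>
     (\<forall>t\<in>{0<..<1}. (\<phi> has_real_derivative \<phi>' t) (at t)) \<and>
     (\<forall>t\<in>{0<..<1}. (\<phi>' has_real_derivative \<phi>'' t) (at t)) \<and>
     (\<forall>t\<in>{0<..<1}. real (n choose k) * (\<phi>' t / t) ^ k
         + real ((n - 1) choose (k - 1)) * (\<phi>' t / t) ^ (k - 1) * (\<phi>'' t - \<phi>' t / t)
         = lam * (1 - \<phi> t) powr q) \<and>
     (\<exists>B \<delta>. \<delta> > 0 \<and> (\<forall>t\<in>{0<..<\<delta>}. \<bar>\<phi>' t\<bar> \<le> B)) \<and>
     (\<forall>t\<in>{0..1}. \<phi> t < 1) \<and> \<phi> 0 < \<phi> 1"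

text \<open>The equation is in divergence form:
  \<open>(r^(n-k) \<phi>'^k)' = flux_coeff n k \<lambda> * r^(n-1) (1 - \<phi>)^q\<close>.\<close>
definition radial_flux :: "nat \<Rightarrow> nat \<Rightarrow> (real \<Rightarrow> real) \<Rightarrow> real \<Rightarrow> real" where
  "radial_flux n k \<phi>' t = t ^ (n - k) * \<phi>' t ^ k"

definition flux_coeff :: "nat \<Rightarrow> nat \<Rightarrow> real \<Rightarrow> real" where
  "flux_coeff n k lam = real k * lam / real ((n - 1) choose (k - 1))"

lemma flux_coeff_pos: "1 \<le> k \<Longrightarrow> k < n \<Longrightarrow> lam > 0 \<Longrightarrow> flux_coeff n k lam > 0"
  unfolding flux_coeff_def by simp

lemma radial_odeD:
  assumes "radial_ode n k lam q \<phi> \<phi>' \<phi>''" "t \<in> {0<..<1}"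
  shows "(\<phi> has_real_derivative \<phi>' t) (at t)" "(\<phi>' has_real_derivative \<phi>'' t) (at t)"
  using assms unfolding radial_ode_def by auto

lemma has_real_derivative_radial_flux:
  assumes ode: "radial_ode n k lam q \<phi> \<phi>' \<phi>''" and k: "1 \<le> k" "k < n" and t: "t \<in> {0<..<1}"
  shows "(radial_flux n k \<phi>' has_real_derivative flux_coeff n k lam * t ^ (n - 1) * (1 - \<phi> t) powr q) (at t)"
proof -
  let ?Cn = "real (n choose k)" and ?Cm = "real ((n - 1) choose (k - 1))"
  have eq: "?Cn * (\<phi>' t / t) ^ k + ?Cm * (\<phi>' t / t) ^ (k - 1) * (\<phi>'' t - \<phi>' t / t) = lam * (1 - \<phi> t) powr q"
    using ode t unfolding radial_ode_def by auto
  have "(radial_flux n k \<phi>' has_real_derivative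
      real (n - k) * t ^ (n - k - 1) * \<phi>' t ^ k + t ^ (n - k) * (real k * \<phi>' t ^ (k - 1) * \<phi>'' t)) (at t)"
    unfolding radial_flux_def[abs_def]
    by (auto intro!: derivative_eq_intros radial_odeD[OF ode t] simp: algebra_simps)
  moreover have "real (n - k) * t ^ (n - k - 1) * \<phi>' t ^ k + t ^ (n - k) * (real k * \<phi>' t ^ (k - 1) * \<phi>'' t)
      = (real k / ?Cm) * t ^ (n - 1) *
        (?Cn * (\<phi>' t / t) ^ k + ?Cm * (\<phi>' t / t) ^ (k - 1) * (\<phi>'' t - \<phi>' t / t))"
  proof -
    have Cm: "?Cm > 0"
      using k by simp
    have "k * (n choose k) = n * ((n - 1) choose (k - 1))"
      using k by (intro times_binomial_minus1_eq) simp
    then have "real k * ?Cn = real n * ?Cm"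
      by (metis of_nat_mult)
    then have Cn: "real k * ?Cn / ?Cm - real k = real n - real k"
      using Cm by (simp add: field_simps)
    obtain p where p: "n = k + p + 1"
      using k by (metis add.commute add_Suc less_imp_Suc_add plus_1_eq_Suc)
    obtain k' where k': "k = Suc k'"
      using k by (cases k) auto
    define d where "d = \<phi>' t / t"
    have \<phi>'_eq: "\<phi>' t = t * d"
      using t by (simp add: d_def)
    have "(real k / ?Cm) * (?Cn * d ^ k + ?Cm * d ^ (k - 1) * (\<phi>'' t - d))
        = (real k * ?Cn / ?Cm - real k) * d ^ k + real k * d ^ (k - 1) * \<phi>'' t"
      using Cm by (simp add: field_simps k')
    then have "(real k / ?Cm) * t ^ (n - 1) * (?Cn * d ^ k + ?Cm * d ^ (k - 1) * (\<phi>'' t - d))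
        = t ^ (n - 1) * ((real n - real k) * d ^ k + real k * d ^ (k - 1) * \<phi>'' t)"
      unfolding Cn by (simp only: mult_ac)
    also have "\<dots> = real (n - k) * t ^ (n - k - 1) * \<phi>' t ^ k + t ^ (n - k) * (real k * \<phi>' t ^ (k - 1) * \<phi>'' t)"
      unfolding \<phi>'_eq using k by (simp add: p k' power_mult_distrib power_add algebra_simps)
    finally show ?thesis
      by (simp add: d_def)
  qed
  ultimately show ?thesis
    using eq by (simp add: flux_coeff_def mult_ac)
qed

lemma nonneg_if_deriv_nonneg_at_right_0:
  fixes h h' :: "real \<Rightarrow> real"
  assumes t: "0 < t"
    and h': "\<And>s. 0 < s \<Longrightarrow> s \<le> t \<Longrightarrow> (h has_real_derivative h' s) (at s)"
    and nonneg: "\<And>s. 0 < s \<Longrightarrow> s < t \<Longrightarrow> h' s \<ge> 0"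
    and lim: "(h \<longlongrightarrow> 0) (at_right 0)"
  shows "h t \<ge> 0"
proof -
  have "h e \<le> h t" if "0 < e" "e < t" for e
  proof (rule DERIV_nonneg_imp_increasing_open[of e t h])
    show "e \<le> t"
      using that by simp
    show "\<exists>y. DERIV h x :> y \<and> y \<ge> 0" if "e < x" "x < t" for x
      using h'[of x] nonneg[of x] that \<open>0 < e\<close> by auto
    show "continuous_on {e..t} h"
      using \<open>0 < e\<close> by (intro continuous_at_imp_continuous_on ballI DERIV_isCont[OF h']) auto
  qed
  then have "eventually (\<lambda>e. h e \<le> h t) (at_right 0)"
    unfolding eventually_at_right_field using t by blast
  then show ?thesis
    using tendsto_le[OF trivial_limit_at_right_real tendsto_const lim] by simp
qed

lemma abs_diff_le_if_abs_deriv_diff_le: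
  fixes F G P F' G' P' :: "real \<Rightarrow> real"
  assumes t: "0 < t"
    and F': "\<And>s. 0 < s \<Longrightarrow> s \<le> t \<Longrightarrow> (F has_real_derivative F' s) (at s)"
    and G': "\<And>s. 0 < s \<Longrightarrow> s \<le> t \<Longrightarrow> (G has_real_derivative G' s) (at s)"
    and P': "\<And>s. 0 < s \<Longrightarrow> s \<le> t \<Longrightarrow> (P has_real_derivative P' s) (at s)"
    and le: "\<And>s. 0 < s \<Longrightarrow> s < t \<Longrightarrow> \<bar>F' s - G' s\<bar> \<le> P' s"
    and lim: "(F \<longlongrightarrow> 0) (at_right 0)" "(G \<longlongrightarrow> 0) (at_right 0)" "(P \<longlongrightarrow> 0) (at_right 0)"
  shows "\<bar>F t - G t\<bar> \<le> P t"
proof -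
  have "P t + c * (F t - G t) \<ge> 0" if c: "c = 1 \<or> c = -1" for c
  proof (rule nonneg_if_deriv_nonneg_at_right_0[OF t])
    show "((\<lambda>s. P s + c * (F s - G s)) has_real_derivative P' s + c * (F' s - G' s)) (at s)"
      if "0 < s" "s \<le> t" for s
      using that by (intro DERIV_add DERIV_cmult DERIV_diff F' G' P')
    show "P' s + c * (F' s - G' s) \<ge> 0" if "0 < s" "s < t" for s
      using le[OF that] c by (auto simp: abs_le_iff)
    show "((\<lambda>s. P s + c * (F s - G s)) \<longlongrightarrow> 0) (at_right 0)"
      using tendsto_add[OF lim(3) tendsto_mult[OF tendsto_const tendsto_diff[OF lim(1,2)]]] by simp
  qed
  from this[of 1] this[of "-1"] show ?thesis
    by (simp add: abs_le_iff)
qed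

lemma radial_ode_gap_bounds:
  assumes "radial_ode n k lam q \<phi> \<phi>' \<phi>''"
  obtains \<nu> M where "\<nu> > 0" "\<And>t. t \<in> {0..1} \<Longrightarrow> \<nu> \<le> 1 - \<phi> t \<and> 1 - \<phi> t \<le> M"
proof -
  have c: "continuous_on {0..1::real} (\<lambda>t. 1 - \<phi> t)"
    using assms unfolding radial_ode_def by (intro continuous_intros) auto
  obtain a where a: "a \<in> {0..1}" "\<forall>y\<in>{0..1}. 1 - \<phi> a \<le> 1 - \<phi> y"
    using continuous_attains_inf[OF compact_Icc _ c] by auto
  obtain b where "\<forall>y\<in>{0..1}. 1 - \<phi> y \<le> 1 - \<phi> b"
    using continuous_attains_sup[OF compact_Icc _ c] by auto
  moreover have "1 - \<phi> a > 0"
    using assms a(1) unfolding radial_ode_def by auto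
  ultimately show ?thesis
    using a that[of "1 - \<phi> a" "1 - \<phi> b"] by auto
qed

lemma radial_flux_tendsto_0:
  assumes ode: "radial_ode n k lam q \<phi> \<phi>' \<phi>''" and k: "k < n"
  shows "(radial_flux n k \<phi>' \<longlongrightarrow> 0) (at_right 0)"
proof -
  obtain B \<delta> where \<delta>: "\<delta> > 0" "\<forall>t\<in>{0<..<\<delta>}. \<bar>\<phi>' t\<bar> \<le> B"
    using ode unfolding radial_ode_def by auto
  have "eventually (\<lambda>t. norm (radial_flux n k \<phi>' t) \<le> t ^ (n - k) * B ^ k) (at_right 0)"
    unfolding eventually_at_right_field
  proof (intro exI[of _ \<delta>] conjI allI impI)
    fix t :: real
    assume "0 < t" "t < \<delta>"
    then have "\<bar>\<phi>' t\<bar> ^ k \<le> B ^ k"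
      using \<delta> by (intro power_mono) auto
    then show "norm (radial_flux n k \<phi>' t) \<le> t ^ (n - k) * B ^ k"
      using \<open>0 < t\<close> by (simp add: radial_flux_def abs_mult power_abs mult_left_mono)
  qed (use \<delta> in auto)
  moreover have "((\<lambda>t. t ^ (n - k) * B ^ k) \<longlongrightarrow> 0 ^ (n - k) * B ^ k) (at_right (0::real))"
    by (intro tendsto_intros)
  ultimately show ?thesis
    using k by (simp add: power_0_left Lim_null_comparison)
qed

lemma radial_flux_lower_bound:
  assumes ode: "radial_ode n k lam q \<phi> \<phi>' \<phi>''" and k: "1 \<le> k" "k < n" and lam: "lam > 0"
    and q: "q \<ge> 0" and \<nu>: "\<nu> > 0" "\<And>t. t \<in> {0..1} \<Longrightarrow> \<nu> \<le> 1 - \<phi> t" and t: "t \<in> {0<..<1}"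
  shows "radial_flux n k \<phi>' t \<ge> (flux_coeff n k lam / real n) * \<nu> powr q * t ^ n"
proof -
  let ?A = "flux_coeff n k lam"
  define h where "h s = radial_flux n k \<phi>' s - (?A / real n) * \<nu> powr q * s ^ n" for s
  define h' where "h' s = ?A * s ^ (n - 1) * (1 - \<phi> s) powr q - ?A * \<nu> powr q * s ^ (n - 1)" for s
  have "(h has_real_derivative h' s) (at s)" if "0 < s" "s \<le> t" for s
  proof -
    have "((\<lambda>s. (?A / real n) * \<nu> powr q * s ^ n) has_real_derivative
        (?A / real n) * \<nu> powr q * (real n * s ^ (n - 1))) (at s)"
      using DERIV_cmult[OF DERIV_pow[of n s], of "(?A / real n) * \<nu> powr q"] by simp
    from DERIV_diff[OF has_real_derivative_radial_flux[OF ode k] this]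
    show ?thesis
      unfolding h_def[abs_def] h'_def using that t k by (simp add: mult_ac)
  qed
  moreover have "h' s \<ge> 0" if "0 < s" "s < t" for s
  proof -
    have "\<nu> powr q \<le> (1 - \<phi> s) powr q"
      using \<nu>(2)[of s] \<nu>(1) that t q by (intro powr_mono2) auto
    then show ?thesis
      using flux_coeff_pos[OF k lam] that by (simp add: h'_def mult_left_mono mult_ac)
  qed
  moreover have "(h \<longlongrightarrow> 0 - (?A / real n) * \<nu> powr q * 0 ^ n) (at_right 0)"
    unfolding h_def by (intro tendsto_intros radial_flux_tendsto_0[OF ode k(2)])
  then have "(h \<longlongrightarrow> 0) (at_right 0)"
    using k by (simp add: power_0_left)
  ultimately have "h t \<ge> 0"
    using t by (intro nonneg_if_deriv_nonneg_at_right_0[of t h h']) auto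
  then show ?thesis
    unfolding h_def by simp
qed

lemma radial_ode_deriv_nonzero:
  assumes ode: "radial_ode n k lam q \<phi> \<phi>' \<phi>''" and k: "1 \<le> k" "k < n" and lam: "lam > 0"
    and q: "q \<ge> 0" and t: "t \<in> {0<..<1}"
  shows "\<phi>' t \<noteq> 0"
proof -
  obtain \<nu> M where \<nu>: "\<nu> > 0" "\<And>t. t \<in> {0..1} \<Longrightarrow> \<nu> \<le> 1 - \<phi> t \<and> 1 - \<phi> t \<le> M"
    using radial_ode_gap_bounds[OF ode] by blast
  have "0 < (flux_coeff n k lam / real n) * \<nu> powr q * t ^ n"
    using flux_coeff_pos[OF k lam] \<nu> t k by simp
  also have "\<dots> \<le> radial_flux n k \<phi>' t"
    using radial_flux_lower_bound[OF ode k lam q \<nu>(1) _ t] \<nu>(2) by blast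
  finally show ?thesis
    using k by (auto simp: radial_flux_def power_0_left)
qed

text \<open>Since \<open>\<phi>(0) < \<phi>(1)\<close>, the mean value theorem gives a point where \<open>\<phi>' > 0\<close>, and \<open>\<phi>'\<close>
  cannot change sign.\<close>
lemma radial_ode_deriv_pos:
  assumes ode: "radial_ode n k lam q \<phi> \<phi>' \<phi>''" and k: "1 \<le> k" "k < n" and lam: "lam > 0"
    and q: "q \<ge> 0" and t: "t \<in> {0<..<1}"
  shows "\<phi>' t > 0"
proof -
  note nz = radial_ode_deriv_nonzero[OF ode k lam q]
  have cont: "continuous_on {a..b} \<phi>'" if "0 < a" "b < 1" for a b
    using that by (intro continuous_at_imp_continuous_on ballI DERIV_isCont[OF radial_odeD(2)[OF ode]]) auto
  have "\<phi> differentiable (at x)" if "0 < x" "x < 1" for x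
    using radial_odeD(1)[OF ode, of x] that by (auto simp: real_differentiable_def)
  moreover have "continuous_on {0..1} \<phi>"
    using ode unfolding radial_ode_def by blast
  ultimately obtain l z where z: "0 < z" "z < 1" "DERIV \<phi> z :> l" "\<phi> 1 - \<phi> 0 = (1 - 0) * l"
    using MVT[of 0 1 \<phi>] by auto
  have "l = \<phi>' z"
    using DERIV_unique[OF z(3) radial_odeD(1)[OF ode]] z by auto
  moreover have "\<phi> 0 < \<phi> 1"
    using ode unfolding radial_ode_def by blast
  ultimately have \<phi>'_z: "\<phi>' z > 0"
    using z by simp
  show ?thesis
  proof (rule ccontr)
    assume "\<not> \<phi>' t > 0"
    then have "\<phi>' t < 0"
      using nz[OF t] by linarith
    show False
    proof (cases "t \<le> z")
      case True
      then obtain x where "t \<le> x" "x \<le> z" "\<phi>' x = 0"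
        using IVT'[of \<phi>' t 0 z] \<open>\<phi>' t < 0\<close> \<phi>'_z cont[of t z] t z by auto
      then show False
        using nz[of x] t z by auto
    next
      case False
      then obtain x where "z \<le> x" "x \<le> t" "\<phi>' x = 0"
        using IVT2'[of \<phi>' t 0 z] \<open>\<phi>' t < 0\<close> \<phi>'_z cont[of z t] t z by auto
      then show False
        using nz[of x] t z by auto
    qed
  qed
qed

section \<open>Uniqueness for the singular initial value problem\<close>

lemma abs_powr_diff_le:
  fixes a b \<nu> M q :: real
  assumes "0 < \<nu>" "\<nu> \<le> a" "a \<le> M" "\<nu> \<le> b" "b \<le> M" "q \<ge> 0"
  shows "\<bar>a powr q - b powr q\<bar> \<le> q * (\<nu> powr (q - 1) + M powr (q - 1)) * \<bar>a - b\<bar>"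
proof -
  have "norm ((\<lambda>z. z powr q) a - (\<lambda>z. z powr q) b) \<le> (q * (\<nu> powr (q - 1) + M powr (q - 1))) * norm (a - b)"
  proof (rule field_differentiable_bound[of "{\<nu>..M}" _ "\<lambda>z. q * z powr (q - 1)"])
    show "((\<lambda>z. z powr q) has_field_derivative q * z powr (q - 1)) (at z within {\<nu>..M})"
      if "z \<in> {\<nu>..M}" for z
      using has_real_derivative_powr[of z q] that assms(1) by (auto intro: has_field_derivative_at_within)
    show "norm (q * z powr (q - 1)) \<le> q * (\<nu> powr (q - 1) + M powr (q - 1))" if "z \<in> {\<nu>..M}" for z
    proof -
      have "z powr (q - 1) \<le> \<nu> powr (q - 1) + M powr (q - 1)"
      proof (cases "q - 1 \<le> 0")
        case True
        then have "z powr (q - 1) \<le> \<nu> powr (q - 1)"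
          using that assms(1) by (intro powr_mono2') auto
        then show ?thesis
          using powr_ge_zero[of M "q - 1"] by linarith
      next
        case False
        then have "z powr (q - 1) \<le> M powr (q - 1)"
          using that assms(1) by (intro powr_mono2) auto
        then show ?thesis
          using powr_ge_zero[of \<nu> "q - 1"] by linarith
      qed
      then show ?thesis
        using assms(6) that assms(1) by (simp add: abs_mult mult_left_mono)
    qed
  qed (use assms in auto)
  then show ?thesis
    by simp
qed

lemma abs_root_diff_le:
  fixes a b c :: real
  assumes "0 < c" "c \<le> a" "c \<le> b" "1 \<le> k"
  shows "\<bar>a powr (1 / real k) - b powr (1 / real k)\<bar> \<le> (1 / real k) * c powr (1 / real k - 1) * \<bar>a - b\<bar>"
proof -
  let ?S = "{c..max a b}"
  have "norm ((\<lambda>z. z powr (1 / real k)) a - (\<lambda>z. z powr (1 / real k)) b)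
      \<le> ((1 / real k) * c powr (1 / real k - 1)) * norm (a - b)"
  proof (rule field_differentiable_bound[of ?S _ "\<lambda>z. (1 / real k) * z powr (1 / real k - 1)"])
    show "((\<lambda>z. z powr (1 / real k)) has_field_derivative (1 / real k) * z powr (1 / real k - 1))
        (at z within ?S)" if "z \<in> ?S" for z
      using has_real_derivative_powr[of z "1 / real k"] that assms(1)
      by (auto intro: has_field_derivative_at_within)
    show "norm ((1 / real k) * z powr (1 / real k - 1)) \<le> (1 / real k) * c powr (1 / real k - 1)"
      if "z \<in> ?S" for z
    proof -
      have "z powr (1 / real k - 1) \<le> c powr (1 / real k - 1)"
        using that assms by (intro powr_mono2') (auto simp: field_simps)
      then show ?thesis
        using that assms by (simp add: abs_mult divide_right_mono)
    qed
  qed (use assms in auto)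
  then show ?thesis
    by simp
qed

context
  fixes f f' :: "real \<Rightarrow> real" and K :: real
  assumes cont: "continuous_on {0..1} f"
    and f': "\<And>t. t \<in> {0<..<1} \<Longrightarrow> (f has_real_derivative f' t) (at t)"
    and f'_le: "\<And>t \<Delta>. t \<in> {0<..<1} \<Longrightarrow> \<forall>s\<in>{0..t}. \<bar>f s\<bar> \<le> \<Delta> \<Longrightarrow> \<bar>f' t\<bar> \<le> K * \<Delta>"
    and K: "K \<ge> 0"
begin

text \<open>By the mean value theorem, a bound on \<open>|f|\<close> halves on any interval of length
  \<open>1 / (2K + 1)\<close> beyond a point up to which \<open>f\<close> vanishes.\<close>
lemma abs_le_half_if_deriv_le_sup:
  assumes r: "0 \<le> r" "\<forall>t\<in>{0..r}. f t = 0" and s: "s \<le> 1" "s \<le> r + 1 / (2 * K + 1)"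
    and \<Delta>: "\<forall>t\<in>{0..s}. \<bar>f t\<bar> \<le> \<Delta>" and t: "t \<in> {0..s}"
  shows "\<bar>f t\<bar> \<le> \<Delta> / 2"
proof (cases "t \<le> r")
  case True
  have "\<Delta> \<ge> 0"
    using \<Delta> t by force
  then show ?thesis
    using r True t by auto
next
  case False
  have "continuous_on {r..t} f"
    using r t s by (auto intro: continuous_on_subset[OF cont])
  moreover have "f differentiable (at x)" if "r < x" "x < t" for x
    using f'[of x] that r t s by (auto simp: real_differentiable_def)
  ultimately obtain l z where z: "r < z" "z < t" "DERIV f z :> l" "f t - f r = (t - r) * l"
    using MVT[of r t f] False by auto
  then have "l = f' z"
    using DERIV_unique f'[of z] r s t by auto
  have "\<Delta> \<ge> 0"
    using \<Delta> t by force
  have "\<bar>f' z\<bar> \<le> K * \<Delta>"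
    using f'_le[of z \<Delta>] \<Delta> z t s r by auto
  have "\<bar>f t\<bar> = (t - r) * \<bar>f' z\<bar>"
    using z r False \<open>l = f' z\<close> by (simp add: abs_mult)
  also have "\<dots> \<le> 1 / (2 * K + 1) * (K * \<Delta>)"
    using \<open>\<bar>f' z\<bar> \<le> K * \<Delta>\<close> False s t \<open>\<Delta> \<ge> 0\<close> K by (intro mult_mono) auto
  also have "\<dots> \<le> \<Delta> / 2"
    using K \<open>\<Delta> \<ge> 0\<close> by (simp add: field_simps mult_right_mono)
  finally show ?thesis .
qed

lemma eq_0_beyond_zeros:
  assumes bdd: "\<And>t. t \<in> {0..1} \<Longrightarrow> \<bar>f t\<bar> \<le> M"
    and r: "0 \<le> r" "\<forall>t\<in>{0..r}. f t = 0" and s: "s \<le> 1" "s \<le> r + 1 / (2 * K + 1)"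
    and t: "t \<in> {0..s}"
  shows "f t = 0"
proof -
  have "\<forall>t\<in>{0..s}. \<bar>f t\<bar> \<le> M / 2 ^ i" for i
  proof (induction i)
    case 0
    then show ?case
      using bdd s by auto
  next
    case (Suc i)
    have "\<bar>f t\<bar> \<le> M / 2 ^ i / 2" if "t \<in> {0..s}" for t
      using abs_le_half_if_deriv_le_sup[OF r s Suc that] .
    then show ?case
      by (simp add: mult.commute)
  qed
  moreover have "(\<lambda>i. M / 2 ^ i) \<longlonglongrightarrow> 0"
    by (rule LIMSEQ_divide_realpow_zero) simp
  ultimately have "\<bar>f t\<bar> \<le> 0"
    using t by (intro LIMSEQ_le_const) auto
  then show ?thesis
    by simp
qed

lemma eq_0_if_deriv_le_sup:
  assumes f0: "f 0 = 0" and bdd: "\<And>t. t \<in> {0..1} \<Longrightarrow> \<bar>f t\<bar> \<le> M"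
  shows "\<forall>t\<in>{0..1}. f t = 0"
proof -
  define h where "h = 1 / (2 * K + 1)"
  have h: "h > 0"
    using K by (simp add: h_def)
  have "\<forall>t\<in>{0..1}. t \<le> real j * h \<longrightarrow> f t = 0" for j
  proof (induction j)
    case 0
    then show ?case
      using f0 h by auto
  next
    case (Suc j)
    have "0 \<le> min 1 (real j * h)" "\<forall>t\<in>{0..min 1 (real j * h)}. f t = 0"
      using Suc h by auto
    moreover have "min 1 (real (Suc j) * h) \<le> 1" "min 1 (real (Suc j) * h) \<le> min 1 (real j * h) + h"
      using h by (auto simp: min_def algebra_simps)
    ultimately have "f t = 0" if "t \<in> {0..min 1 (real (Suc j) * h)}" for t
      using eq_0_beyond_zeros[OF bdd] that unfolding h_def by blast
    then show ?case
      by auto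
  qed
  moreover obtain j where "1 / h < real j"
    using reals_Archimedean2 by blast
  then have "1 \<le> real j * h"
    using h by (simp add: field_simps)
  ultimately show ?thesis
    by (meson atLeastAtMost_iff order_trans)
qed

end

lemma radial_ode_deriv_eq_flux_root:
  assumes ode: "radial_ode n k lam q \<phi> \<phi>' \<phi>''" and k: "1 \<le> k" "k < n" and lam: "lam > 0"
    and q: "q \<ge> 0" and t: "t \<in> {0<..<1}"
  shows "\<phi>' t = radial_flux n k \<phi>' t powr (1 / real k) / t powr ((real n - real k) / real k)"
proof -
  have \<phi>': "\<phi>' t > 0"
    by (rule radial_ode_deriv_pos[OF assms])
  have t0: "t > 0"
    using t by simp
  have "radial_flux n k \<phi>' t powr (1 / real k) = (t ^ (n - k)) powr (1 / real k) * (\<phi>' t ^ k) powr (1 / real k)"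
    using t0 \<phi>' by (simp add: radial_flux_def powr_mult)
  also have "(t ^ (n - k)) powr (1 / real k) = t powr ((real n - real k) / real k)"
    using t0 k by (simp add: powr_realpow[symmetric] powr_powr of_nat_diff)
  also have "(\<phi>' t ^ k) powr (1 / real k) = \<phi>' t"
    using \<phi>' k by (simp add: powr_realpow[symmetric] powr_powr)
  finally show ?thesis
    using t0 by simp
qed

context
  fixes n k :: nat and lam q \<nu> M :: real and \<phi> \<phi>' \<phi>'' \<psi> \<psi>' \<psi>'' :: "real \<Rightarrow> real"
  assumes ode_\<phi>: "radial_ode n k lam q \<phi> \<phi>' \<phi>''" and ode_\<psi>: "radial_ode n k lam q \<psi> \<psi>' \<psi>''"
    and k: "1 \<le> k" "k < n" and lam: "lam > 0" and q: "q \<ge> 0" and \<nu>: "\<nu> > 0"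
    and gap: "\<And>t. t \<in> {0..1} \<Longrightarrow> \<nu> \<le> 1 - \<phi> t \<and> 1 - \<phi> t \<le> M \<and> \<nu> \<le> 1 - \<psi> t \<and> 1 - \<psi> t \<le> M"
begin

text \<open>Integrating the divergence form, with \<open>q (\<nu>^(q-1) + M^(q-1))\<close> a Lipschitz constant of
  \<open>z \<mapsto> z^q\<close> on \<open>[\<nu>, M]\<close>.\<close>
lemma radial_flux_diff_le:
  assumes t: "t \<in> {0<..<1}" and \<Delta>: "\<forall>s\<in>{0..t}. \<bar>\<phi> s - \<psi> s\<bar> \<le> \<Delta>"
  shows "\<bar>radial_flux n k \<phi>' t - radial_flux n k \<psi>' t\<bar>
           \<le> (flux_coeff n k lam / real n) * (q * (\<nu> powr (q - 1) + M powr (q - 1))) * \<Delta> * t ^ n"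
proof -
  define A where "A = flux_coeff n k lam"
  define L where "L = q * (\<nu> powr (q - 1) + M powr (q - 1))"
  have A: "A > 0"
    using flux_coeff_pos[OF k lam] by (simp add: A_def)
  have L: "L \<ge> 0"
    using q by (simp add: L_def)
  show ?thesis
    unfolding A_def[symmetric] L_def[symmetric]
  proof (rule abs_diff_le_if_abs_deriv_diff_le[where F = "radial_flux n k \<phi>'" and G = "radial_flux n k \<psi>'"
        and P = "\<lambda>s. (A / real n) * L * \<Delta> * s ^ n"])
    show "(radial_flux n k \<phi>' has_real_derivative A * s ^ (n - 1) * (1 - \<phi> s) powr q) (at s)"
      "(radial_flux n k \<psi>' has_real_derivative A * s ^ (n - 1) * (1 - \<psi> s) powr q) (at s)"
      if "0 < s" "s \<le> t" for s
      using that t has_real_derivative_radial_flux[OF ode_\<phi> k] has_real_derivative_radial_flux[OF ode_\<psi> k]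
      by (auto simp: A_def)
    show "((\<lambda>s. (A / real n) * L * \<Delta> * s ^ n) has_real_derivative A * L * \<Delta> * s ^ (n - 1)) (at s)"
      if "0 < s" "s \<le> t" for s
      using DERIV_cmult[OF DERIV_pow[of n s], of "(A / real n) * L * \<Delta>"] k by (simp add: mult.assoc)
    show "\<bar>A * s ^ (n - 1) * (1 - \<phi> s) powr q - A * s ^ (n - 1) * (1 - \<psi> s) powr q\<bar>
        \<le> A * L * \<Delta> * s ^ (n - 1)" if "0 < s" "s < t" for s
    proof -
      have "\<bar>(1 - \<phi> s) powr q - (1 - \<psi> s) powr q\<bar> \<le> L * \<bar>(1 - \<phi> s) - (1 - \<psi> s)\<bar>"
        unfolding L_def using gap[of s] that t \<nu> q by (intro abs_powr_diff_le) auto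
      also have "\<dots> \<le> L * \<Delta>"
        using \<Delta> that L by (auto intro!: mult_left_mono simp: abs_minus_commute)
      finally show ?thesis
        using A that by (simp add: right_diff_distrib[symmetric] abs_mult mult_left_mono mult_ac)
    qed
    show "(radial_flux n k \<phi>' \<longlongrightarrow> 0) (at_right 0)" "(radial_flux n k \<psi>' \<longlongrightarrow> 0) (at_right 0)"
      using radial_flux_tendsto_0[OF ode_\<phi> k(2)] radial_flux_tendsto_0[OF ode_\<psi> k(2)] .
    have "((\<lambda>s. (A / real n) * L * \<Delta> * s ^ n) \<longlongrightarrow> (A / real n) * L * \<Delta> * 0 ^ n) (at_right 0)"
      by (intro tendsto_intros)
    then show "((\<lambda>s. (A / real n) * L * \<Delta> * s ^ n) \<longlongrightarrow> 0) (at_right 0)"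
      using k by (simp add: power_0_left)
  qed (use t in simp)
qed

text \<open>Since \<open>\<phi>' = (r^(n-k) \<phi>'^k)^(1/k) / r^((n-k)/k)\<close>, the lower bound \<open>c r^n\<close> on both fluxes
  turns a bound \<open>B r^n\<close> on their difference into the bound \<open>B r / (k c^(1 - 1/k))\<close>.\<close>
lemma radial_ode_deriv_diff_le_flux_diff:
  assumes t: "t \<in> {0<..<1}"
    and flux_diff: "\<bar>radial_flux n k \<phi>' t - radial_flux n k \<psi>' t\<bar> \<le> B * t ^ n"
  defines "c \<equiv> (flux_coeff n k lam / real n) * \<nu> powr q"
  shows "\<bar>\<phi>' t - \<psi>' t\<bar> \<le> (1 / real k) * c powr (1 / real k - 1) * B * t"
proof -
  let ?F = "radial_flux n k \<phi>' t" and ?G = "radial_flux n k \<psi>' t"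
  let ?e = "(real n - real k) / real k"
  have t0: "t > 0"
    using t by auto
  have c: "c > 0"
    using flux_coeff_pos[OF k lam] \<nu> k by (simp add: c_def)
  have lower: "c * t ^ n \<le> ?F" "c * t ^ n \<le> ?G"
    using radial_flux_lower_bound[OF ode_\<phi> k lam q \<nu> _ t] radial_flux_lower_bound[OF ode_\<psi> k lam q \<nu> _ t] gap
    by (auto simp: c_def mult_ac)
  have "\<bar>?F powr (1 / real k) - ?G powr (1 / real k)\<bar> \<le> (1 / real k) * (c * t ^ n) powr (1 / real k - 1) * \<bar>?F - ?G\<bar>"
    using lower c t0 k by (intro abs_root_diff_le) auto
  also have "\<dots> \<le> (1 / real k) * (c * t ^ n) powr (1 / real k - 1) * (B * t ^ n)"
    using flux_diff k by (intro mult_left_mono) auto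
  also have "\<dots> = (1 / real k) * c powr (1 / real k - 1) * B * (t ^ n * (t ^ n) powr (1 / real k - 1))"
    using c t0 by (simp add: powr_mult mult_ac)
  also have "t ^ n * (t ^ n) powr (1 / real k - 1) = t powr ?e * t"
  proof -
    have "t ^ n * (t ^ n) powr (1 / real k - 1) = t powr (real n + real n * (1 / real k - 1))"
      using t0 by (simp add: powr_realpow[symmetric] powr_powr powr_add)
    also have "real n + real n * (1 / real k - 1) = ?e + 1"
      using k by (simp add: field_simps)
    finally show ?thesis
      using t0 by (simp add: powr_add)
  qed
  finally have "\<bar>?F powr (1 / real k) - ?G powr (1 / real k)\<bar> / t powr ?e \<le> (1 / real k) * c powr (1 / real k - 1) * B * t"
    using t0 by (simp add: divide_le_eq mult_ac)
  moreover have "\<bar>\<phi>' t - \<psi>' t\<bar> = \<bar>?F powr (1 / real k) - ?G powr (1 / real k)\<bar> / t powr ?e"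
    using radial_ode_deriv_eq_flux_root[OF ode_\<phi> k lam q t] radial_ode_deriv_eq_flux_root[OF ode_\<psi> k lam q t]
    by (simp add: diff_divide_distrib[symmetric] abs_divide)
  ultimately show ?thesis
    by simp
qed

lemma radial_ode_deriv_diff_le:
  obtains K where "K \<ge> 0"
    and "\<And>t \<Delta>. t \<in> {0<..<1} \<Longrightarrow> \<forall>s\<in>{0..t}. \<bar>\<phi> s - \<psi> s\<bar> \<le> \<Delta> \<Longrightarrow> \<bar>\<phi>' t - \<psi>' t\<bar> \<le> K * \<Delta>"
proof -
  define B where "B = (flux_coeff n k lam / real n) * (q * (\<nu> powr (q - 1) + M powr (q - 1)))"
  define c where "c = (flux_coeff n k lam / real n) * \<nu> powr q"
  define K where "K = (1 / real k) * c powr (1 / real k - 1) * B"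
  have "K \<ge> 0"
    using flux_coeff_pos[OF k lam] q k by (simp add: K_def B_def)
  moreover have "\<bar>\<phi>' t - \<psi>' t\<bar> \<le> K * \<Delta>"
    if t: "t \<in> {0<..<1}" and \<Delta>: "\<forall>s\<in>{0..t}. \<bar>\<phi> s - \<psi> s\<bar> \<le> \<Delta>" for t \<Delta>
  proof -
    have "\<Delta> \<ge> 0"
      using \<Delta> t by force
    have "\<bar>\<phi>' t - \<psi>' t\<bar> \<le> K * \<Delta> * t"
      using radial_ode_deriv_diff_le_flux_diff[OF t, of "B * \<Delta>"] radial_flux_diff_le[OF t \<Delta>]
      by (simp add: K_def B_def c_def mult_ac)
    also have "\<dots> \<le> K * \<Delta>"
      using \<open>K \<ge> 0\<close> \<open>\<Delta> \<ge> 0\<close> t by (simp add: mult_left_le)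
    finally show ?thesis .
  qed
  ultimately show ?thesis
    by (rule that)
qed

end

lemma radial_ode_unique:
  assumes ode_\<phi>: "radial_ode n k lam q \<phi> \<phi>' \<phi>''" and ode_\<psi>: "radial_ode n k lam q \<psi> \<psi>' \<psi>''"
    and k: "1 \<le> k" "k < n" and lam: "lam > 0" and q: "q \<ge> 0" and init: "\<phi> 0 = \<psi> 0"
  shows "\<forall>t\<in>{0..1}. \<phi> t = \<psi> t"
proof -
  obtain \<nu>1 M1 where \<nu>1: "\<nu>1 > 0" "\<And>t. t \<in> {0..1} \<Longrightarrow> \<nu>1 \<le> 1 - \<phi> t \<and> 1 - \<phi> t \<le> M1"
    using radial_ode_gap_bounds[OF ode_\<phi>] by blast
  obtain \<nu>2 M2 where \<nu>2: "\<nu>2 > 0" "\<And>t. t \<in> {0..1} \<Longrightarrow> \<nu>2 \<le> 1 - \<psi> t \<and> 1 - \<psi> t \<le> M2"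
    using radial_ode_gap_bounds[OF ode_\<psi>] by blast
  have gap: "min \<nu>1 \<nu>2 \<le> 1 - \<phi> t \<and> 1 - \<phi> t \<le> max M1 M2 \<and> min \<nu>1 \<nu>2 \<le> 1 - \<psi> t \<and> 1 - \<psi> t \<le> max M1 M2"
    if "t \<in> {0..1}" for t
    using \<nu>1(2)[OF that] \<nu>2(2)[OF that] by auto
  obtain K where K: "K \<ge> 0"
    and deriv_le: "\<And>t \<Delta>. t \<in> {0<..<1} \<Longrightarrow> \<forall>s\<in>{0..t}. \<bar>\<phi> s - \<psi> s\<bar> \<le> \<Delta> \<Longrightarrow> \<bar>\<phi>' t - \<psi>' t\<bar> \<le> K * \<Delta>"
    using radial_ode_deriv_diff_le[OF ode_\<phi> ode_\<psi> k lam q _ gap] \<nu>1(1) \<nu>2(1) by (metis min_less_iff_conj)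
  have "continuous_on {0..1} (\<lambda>t. \<phi> t - \<psi> t)"
    using ode_\<phi> ode_\<psi> unfolding radial_ode_def by (intro continuous_intros) auto
  moreover have "((\<lambda>t. \<phi> t - \<psi> t) has_real_derivative \<phi>' t - \<psi>' t) (at t)" if "t \<in> {0<..<1}" for t
    using radial_odeD(1)[OF ode_\<phi> that] radial_odeD(1)[OF ode_\<psi> that] by (rule DERIV_diff)
  moreover have "\<bar>\<phi> t - \<psi> t\<bar> \<le> max M1 M2 - min \<nu>1 \<nu>2" if "t \<in> {0..1}" for t
    using gap[OF that] by auto
  ultimately have "\<forall>t\<in>{0..1}. \<phi> t - \<psi> t = 0"
    using init by (intro eq_0_if_deriv_le_sup[where f' = "\<lambda>t. \<phi>' t - \<psi>' t" and K = K] deriv_le K)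
      simp_all
  then show ?thesis
    by simp
qed

section \<open>Radial solutions solve the radial equation\<close>

lemma has_real_derivative_radial_profile:
  fixes u :: "real^'n::finite \<Rightarrow> real"
  assumes C2: "C2_on (ball 0 1) u" and u: "\<forall>x\<in>cball 0 1. u x = \<phi> (norm x)"
    and t: "t \<in> {0<..<1}"
  shows "(\<phi> has_real_derivative pderiv1 j u (t *\<^sub>R axis j 1)) (at t)"
    and "((\<lambda>t. pderiv1 j u (t *\<^sub>R axis j 1)) has_real_derivative hessian u (t *\<^sub>R axis j 1) $ j $ j) (at t)"
proof -
  have "t *\<^sub>R axis j 1 \<in> ball (0::real^'n) 1"
    using t by simp
  then have du: "u differentiable (at (t *\<^sub>R axis j 1))"
    and dp: "pderiv1 j u differentiable (at (t *\<^sub>R axis j 1))"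
    using C2 unfolding C2_on_def by blast+
  show "((\<lambda>t. pderiv1 j u (t *\<^sub>R axis j 1)) has_real_derivative hessian u (t *\<^sub>R axis j 1) $ j $ j) (at t)"
    using has_real_derivative_along_line[OF dp] by (simp add: hessian_def)
  have "u (s *\<^sub>R axis j 1) = \<phi> s" if "s \<in> {0<..<1}" for s
    using u that by simp
  with has_real_derivative_along_line[OF du]
  show "(\<phi> has_real_derivative pderiv1 j u (t *\<^sub>R axis j 1)) (at t)"
    unfolding pderiv1_def using t
    by (auto intro: has_field_derivative_transform_within_open[of _ _ _ "{0<..<1}"])
qed

lemma pderiv1_bounded_on_axis:
  fixes u :: "real^'n::finite \<Rightarrow> real"
  assumes "C2_on (ball 0 1) u"
  obtains B where "\<forall>t\<in>{0..1/2}. \<bar>pderiv1 j u (t *\<^sub>R axis j 1)\<bar> \<le> B"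
proof -
  have "continuous_on (ball 0 1) (pderiv1 j u)"
    using assms unfolding C2_on_def
    by (intro continuous_at_imp_continuous_on ballI differentiable_imp_continuous_within) blast
  then have "continuous_on {0..1/2} (\<lambda>t. pderiv1 j u (t *\<^sub>R axis j 1))"
    by (rule continuous_on_compose2) (auto intro!: continuous_intros)
  then have "compact ((\<lambda>t. pderiv1 j u (t *\<^sub>R axis j 1)) ` {0..1/2})"
    by (rule compact_continuous_image) simp
  then show ?thesis
    using that by (meson bounded_real compact_imp_bounded image_eqI)
qed

lemma radial_ode_of_radial:
  fixes u :: "real^'n::finite \<Rightarrow> real" and \<phi> :: "real \<Rightarrow> real"
  assumes k: "1 \<le> k"
    and C2: "C2_on (ball 0 1) u" and cont: "continuous_on (cball 0 1) u"
    and eq: "\<forall>x\<in>ball 0 1. S_k k (hessian u x) = lam * (1 - u x) powr q"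
    and u: "\<forall>x\<in>cball 0 1. u x = \<phi> (norm x)"
    and lt1: "\<forall>t\<in>{0..1}. \<phi> t < 1" and incr: "\<phi> 0 < \<phi> 1"
  shows "\<exists>\<phi>' \<phi>''. radial_ode CARD('n) k lam q \<phi> \<phi>' \<phi>''"
proof -
  obtain j :: 'n where True by blast
  define e :: "real^'n" where "e = axis j 1"
  define \<phi>' where "\<phi>' t = pderiv1 j u (t *\<^sub>R e)" for t
  define \<phi>'' where "\<phi>'' t = hessian u (t *\<^sub>R e) $ j $ j" for t
  have e: "norm e = 1"
    by (simp add: e_def)
  have \<phi>_eq: "\<phi> s = u (s *\<^sub>R e)" if "s \<in> {0..1}" for s
    using u that e by auto
  have d\<phi>: "(\<phi> has_real_derivative \<phi>' t) (at t)" if "t \<in> {0<..<1}" for t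
    using has_real_derivative_radial_profile(1)[OF C2 u that] by (simp add: \<phi>'_def e_def)
  have d\<phi>': "(\<phi>' has_real_derivative \<phi>'' t) (at t)" if "t \<in> {0<..<1}" for t
    using has_real_derivative_radial_profile(2)[OF C2 u that]
    by (simp add: \<phi>'_def[abs_def] \<phi>''_def e_def)
  have ode: "real (CARD('n) choose k) * (\<phi>' t / t) ^ k
         + real ((CARD('n) - 1) choose (k - 1)) * (\<phi>' t / t) ^ (k - 1) * (\<phi>'' t - \<phi>' t / t)
         = lam * (1 - \<phi> t) powr q" if t: "t \<in> {0<..<1}" for t
  proof -
    have x: "t *\<^sub>R e \<in> ball 0 1" "t *\<^sub>R e \<noteq> 0" "norm (t *\<^sub>R e) = t"
      using t e by auto
    have "\<forall>x\<in>ball 0 1. u x = \<phi> (norm x)"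
      using u by auto
    from S_k_hessian_radial[OF k this d\<phi> d\<phi>' x(1,2)] show ?thesis
      using eq x \<phi>_eq[of t] t by auto
  qed
  obtain B where "\<forall>t\<in>{0..1/2}. \<bar>\<phi>' t\<bar> \<le> B"
    using pderiv1_bounded_on_axis[OF C2] unfolding \<phi>'_def e_def by blast
  then have "\<exists>B \<delta>. \<delta> > 0 \<and> (\<forall>t\<in>{0<..<\<delta>}. \<bar>\<phi>' t\<bar> \<le> B)"
    by (intro exI[of _ B] exI[of _ "1/2"]) auto
  moreover have "continuous_on {0..1} \<phi>"
  proof -
    have "continuous_on {0..1} (\<lambda>t. u (t *\<^sub>R e))"
      by (rule continuous_on_compose2[OF cont]) (use e in \<open>auto intro!: continuous_intros\<close>)
    then show ?thesis
      by (rule continuous_on_eq) (use \<phi>_eq in auto)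
  qed
  ultimately show ?thesis
    unfolding radial_ode_def using d\<phi> d\<phi>' ode lt1 incr by blast
qed

section \<open>The Bliss solutions\<close>

definition bliss_exp :: "nat \<Rightarrow> nat \<Rightarrow> real" where
  "bliss_exp n k = (real n - 2 * real k) / (2 * real k)"

definition crit_exp :: "nat \<Rightarrow> nat \<Rightarrow> real" where
  "crit_exp n k = (real n + 2) * real k / (real n - 2 * real k)"

definition bliss_amp :: "nat \<Rightarrow> nat \<Rightarrow> real \<Rightarrow> real \<Rightarrow> real" where
  "bliss_amp n k lam d = lam powr (- (real n - 2 * real k) / (2 * real k * (real k + 1)))
     * (d * real (n choose k) powr (1 / real k) * ((real n - 2 * real k) / real k))
         powr ((real n - 2 * real k) / (2 * (real k + 1)))"

context
  fixes n k :: nat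
  assumes hk: "1 \<le> k" and hn: "2 * k < n"
begin

lemma dim_minus_twice_pos: "real n - 2 * real k > 0"
  using hn by linarith

lemma bliss_exp_pos: "bliss_exp n k > 0"
  using dim_minus_twice_pos hk by (simp add: bliss_exp_def)

lemma crit_exp_minus_k: "crit_exp n k - real k = 2 * real k * (real k + 1) / (real n - 2 * real k)"
  using dim_minus_twice_pos by (simp add: crit_exp_def field_simps)

lemma crit_exp_minus_k_pos: "crit_exp n k - real k > 0"
  using dim_minus_twice_pos hk by (simp add: crit_exp_minus_k)

lemma bliss_exp_mult_crit_exp_minus_k: "bliss_exp n k * (crit_exp n k - real k) = real k + 1"
  using dim_minus_twice_pos hk by (simp add: crit_exp_minus_k bliss_exp_def field_simps)

lemma bliss_exp_mult_crit_exp: "bliss_exp n k * crit_exp n k = (bliss_exp n k + 1) * real k + 1"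
  using dim_minus_twice_pos hk by (simp add: crit_exp_def bliss_exp_def field_simps)

lemma two_mult_bliss_exp_add_1: "2 * (bliss_exp n k + 1) = real n / real k"
  using hk by (simp add: bliss_exp_def field_simps)

lemma bliss_amp_pos: "lam > 0 \<Longrightarrow> d > 0 \<Longrightarrow> bliss_amp n k lam d > 0"
  using dim_minus_twice_pos hk hn by (simp add: bliss_amp_def)

lemma bliss_amp_powr_crit_exp:
  assumes lam: "lam > 0" and d: "d > 0"
  shows "lam * bliss_amp n k lam d powr (crit_exp n k - real k)
           = real (n choose k) * (2 * bliss_exp n k * d) ^ k"
proof -
  let ?b = "d * real (n choose k) powr (1 / real k) * ((real n - 2 * real k) / real k)"
  have b: "?b > 0"
    using d dim_minus_twice_pos hk hn by simp
  have two_m: "(real n - 2 * real k) / real k = 2 * bliss_exp n k"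
    using hk by (simp add: bliss_exp_def field_simps)
  have "(- (real n - 2 * real k) / (2 * real k * (real k + 1))) * (crit_exp n k - real k) = -1"
    using dim_minus_twice_pos hk by (simp add: crit_exp_minus_k divide_eq_eq)
  moreover have "a / (2 * b) * (2 * c * b / a) = c" if "a \<noteq> 0" "b \<noteq> 0" for a b c :: real
    using that by (simp add: field_simps)
  then have "(real n - 2 * real k) / (2 * (real k + 1)) * (crit_exp n k - real k) = real k"
    using dim_minus_twice_pos by (simp add: crit_exp_minus_k mult_ac)
  ultimately have "bliss_amp n k lam d powr (crit_exp n k - real k) = lam powr (-1) * ?b powr real k"
    unfolding bliss_amp_def using lam b by (simp add: powr_mult powr_powr)
  also have "?b powr real k = d ^ k * (real (n choose k) powr (1 / real k)) ^ k * (2 * bliss_exp n k) ^ k"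
    using b by (simp add: two_m powr_realpow power_mult_distrib)
  also have "(real (n choose k) powr (1 / real k)) ^ k = real (n choose k)"
    using hk hn by (simp add: powr_realpow[symmetric] powr_powr)
  finally show ?thesis
    using lam by (simp add: powr_minus power_mult_distrib field_simps)
qed

lemma bliss_amp_eq_iff:
  assumes lam: "lam > 0" and d: "d > 0"
  shows "bliss_amp n k lam d = (1 + d) powr bliss_exp n k \<longleftrightarrow>
         lam * (d + 1) ^ (k + 1) - real (n choose k) * ((real n - 2 * real k) / real k) ^ k * d ^ k = 0"
proof -
  let ?c = "bliss_amp n k lam d" and ?p = "crit_exp n k - real k"
  have c: "?c > 0"
    using bliss_amp_pos[OF lam d] .
  have "?c = (1 + d) powr bliss_exp n k \<longleftrightarrow> ?c powr ?p = ((1 + d) powr bliss_exp n k) powr ?p"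
    using c d crit_exp_minus_k_pos by (auto simp: powr_powr dest: arg_cong[where f = "\<lambda>y. y powr (1 / ?p)"])
  also have "((1 + d) powr bliss_exp n k) powr ?p = (1 + d) ^ (k + 1)"
    using d by (simp add: powr_powr bliss_exp_mult_crit_exp_minus_k powr_realpow[symmetric] powr_add)
  also have "?c powr ?p = (1 + d) ^ (k + 1) \<longleftrightarrow> lam * ?c powr ?p = lam * (1 + d) ^ (k + 1)"
    using lam by auto
  also have "2 * bliss_exp n k * d = (real n - 2 * real k) / real k * d"
    using hk by (simp add: bliss_exp_def field_simps)
  then have "lam * ?c powr ?p = real (n choose k) * ((real n - 2 * real k) / real k) ^ k * d ^ k"
    using bliss_amp_powr_crit_exp[OF lam d] by (simp only: power_mult_distrib mult.assoc)
  finally show ?thesis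
    by (auto simp: add.commute)
qed

lemma bliss_amp_strict_mono:
  assumes lam: "lam > 0" and d: "0 < d1" "d1 < d2"
  shows "bliss_amp n k lam d1 < bliss_amp n k lam d2"
proof -
  let ?B = "real (n choose k) powr (1 / real k) * ((real n - 2 * real k) / real k)"
  have "?B > 0"
    using dim_minus_twice_pos hk hn by simp
  with d(2) have "d1 * ?B < d2 * ?B"
    by (rule mult_strict_right_mono)
  then have "(d1 * ?B) powr ((real n - 2 * real k) / (2 * (real k + 1)))
      < (d2 * ?B) powr ((real n - 2 * real k) / (2 * (real k + 1)))"
    using d \<open>?B > 0\<close> dim_minus_twice_pos by (intro powr_less_mono2) auto
  then show ?thesis
    unfolding bliss_amp_def using lam by (simp add: mult.assoc)
qed

lemma bliss_amp_surj:
  assumes lam: "lam > 0" and v: "v > 0"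
  obtains d where "d > 0" "bliss_amp n k lam d = v"
proof -
  define P where "P = lam powr (- (real n - 2 * real k) / (2 * real k * (real k + 1)))"
  define B where "B = real (n choose k) powr (1 / real k) * ((real n - 2 * real k) / real k)"
  define e where "e = (real n - 2 * real k) / (2 * (real k + 1))"
  have P: "P > 0" and B: "B > 0" and e: "e > 0"
    using lam dim_minus_twice_pos hk hn by (auto simp: P_def B_def e_def)
  define d where "d = (v / P) powr (1 / e) / B"
  have "d > 0"
    using v P B by (simp add: d_def)
  moreover have "(d * B) powr e = v / P"
    using v P B e by (simp add: d_def powr_powr)
  then have "bliss_amp n k lam d = v"
    unfolding bliss_amp_def P_def[symmetric] e_def[symmetric] using P by (simp add: B_def mult.assoc)
  ultimately show ?thesis
    using that by blast
qed

end

definition bliss_profile :: "nat \<Rightarrow> real \<Rightarrow> real \<Rightarrow> real^'n::finite \<Rightarrow> real" where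
  "bliss_profile k c d x = 1 - c * (1 + d * (x \<bullet> x)) powr (- bliss_exp CARD('n) k)"

lemma bliss_profile_radial:
  "bliss_profile k c d (x::real^'n::finite) = 1 - c * (1 + d * (norm x)\<^sup>2) powr (- bliss_exp CARD('n) k)"
  by (simp add: bliss_profile_def power2_norm_eq_inner)

lemma hessian_bliss_profile:
  fixes x :: "real^'n::finite" and k :: nat
  assumes d: "d > 0"
  defines "m \<equiv> bliss_exp CARD('n) k" and "t \<equiv> 1 + d * (x \<bullet> x)"
  shows "bliss_profile k c d differentiable (at x)"
    and "pderiv1 j (bliss_profile k c d) differentiable (at x)"
    and "hessian (bliss_profile k c d) x =
           id_plus_outer (2 * c * m * d * t powr (- m - 1)) (- 4 * c * m * (m + 1) * d\<^sup>2 * t powr (- m - 2)) x"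
proof -
  define g' where "g' s = c * m * d * (1 + d * s) powr (- m - 1)" for s
  define g'' where "g'' s = - c * m * (m + 1) * d\<^sup>2 * (1 + d * s) powr (- m - 2)" for s
  have pos: "1 + d * s > 0" if "s \<ge> 0" for s
    using d that by (simp add: add_pos_nonneg)
  have dg: "((\<lambda>s. 1 - c * (1 + d * s) powr (- m)) has_real_derivative g' s) (at s)" if "s \<ge> 0" for s
  proof -
    have "((\<lambda>s. (1 + d * s) powr (- m)) has_real_derivative (- m) * (1 + d * s) powr (- m - of_nat 1) * d) (at s)"
      by (rule DERIV_fun_powr) (auto intro!: derivative_eq_intros simp: pos[OF that])
    from DERIV_diff[OF DERIV_const[of 1] DERIV_cmult[OF this, of c]]
    show ?thesis
      unfolding g'_def by (rule DERIV_cong) (simp add: algebra_simps)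
  qed
  have dg': "(g' has_real_derivative g'' s) (at s)" if "s \<ge> 0" for s
  proof -
    have "((\<lambda>s. (1 + d * s) powr (- m - 1)) has_real_derivative (- m - 1) * (1 + d * s) powr (- m - 1 - of_nat 1) * d) (at s)"
      by (rule DERIV_fun_powr) (auto intro!: derivative_eq_intros simp: pos[OF that])
    from DERIV_cmult[OF this, of "c * m * d"]
    show ?thesis
      unfolding g'_def[abs_def] g''_def by (rule DERIV_cong) (simp add: algebra_simps power2_eq_square)
  qed
  have "bliss_profile k c d = (\<lambda>x::real^'n. 1 - c * (1 + d * (x \<bullet> x)) powr (- m))"
    by (simp add: bliss_profile_def[abs_def] m_def)
  then show "bliss_profile k c d differentiable (at x)"
    and "pderiv1 j (bliss_profile k c d) differentiable (at x)"
    and "hessian (bliss_profile k c d) x =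
           id_plus_outer (2 * c * m * d * t powr (- m - 1)) (- 4 * c * m * (m + 1) * d\<^sup>2 * t powr (- m - 2)) x"
    using hessian_comp_inner_self(1)[OF dg dg'] hessian_comp_inner_self(2)[OF dg dg']
      hessian_comp_inner_self(3)[OF dg dg', of x]
    by (simp_all add: g'_def g''_def t_def algebra_simps)
qed

lemma S_k_hessian_bliss_profile:
  fixes x :: "real^'n::finite" and k :: nat
  assumes hk: "1 \<le> k" and hn: "2 * k < CARD('n)" and d: "d > 0"
    and i: "1 \<le> i" "i \<le> CARD('n)"
  defines "m \<equiv> bliss_exp CARD('n) k" and "t \<equiv> 1 + d * (x \<bullet> x)"
  shows "S_k i (hessian (bliss_profile k c d) x)
           = (2 * c * m * d * t powr (- m - 1)) ^ i * real (CARD('n) choose i)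
               * (1 - (real i / real k) * (d * (x \<bullet> x) / t))"
proof -
  let ?n = "CARD('n)"
  define \<alpha> where "\<alpha> = 2 * c * m * d * t powr (- m - 1)"
  have t: "t > 0"
    using d by (simp add: t_def add_pos_nonneg)
  have "t powr (- m - 1) / t = t powr (- m - 1) / t powr 1"
    using t by simp
  also have "\<dots> = t powr ((- m - 1) - 1)"
    by (rule powr_diff[symmetric])
  also have "(- m - 1) - 1 = - m - 2"
    by simp
  finally have tm2: "t powr (- m - 2) = t powr (- m - 1) / t" ..
  have "real ?n / real k = 2 * (m + 1)"
    using two_mult_bliss_exp_add_1[OF hk hn] by (simp add: m_def)
  then have outer: "- 4 * c * m * (m + 1) * d\<^sup>2 * t powr (- m - 2) * (x \<bullet> x)
      = \<alpha> * (- (real ?n / real k)) * (d * (x \<bullet> x) / t)"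
    using t by (simp add: \<alpha>_def tm2 power2_eq_square field_simps)
  have "i * (?n choose i) = ?n * ((?n - 1) choose (i - 1))"
    using i by (intro times_binomial_minus1_eq) simp
  then have binom: "real i * real (?n choose i) = real ?n * real ((?n - 1) choose (i - 1))"
    by (metis of_nat_mult)
  have \<alpha>_pow: "\<alpha> ^ i = \<alpha> ^ (i - 1) * \<alpha>"
    using i by (cases i) auto
  have "real (?n choose i) * \<alpha> ^ i + real ((?n - 1) choose (i - 1)) * \<alpha> ^ (i - 1)
        * (\<alpha> * (- (real ?n / real k)) * (d * (x \<bullet> x) / t))
      = \<alpha> ^ i * (real (?n choose i) - (real ?n * real ((?n - 1) choose (i - 1))) / real k * (d * (x \<bullet> x) / t))"
    by (simp add: \<alpha>_pow field_simps)
  also have "\<dots> = \<alpha> ^ i * real (?n choose i) * (1 - (real i / real k) * (d * (x \<bullet> x) / t))"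
    unfolding binom[symmetric] using hk by (simp add: field_simps)
  finally show ?thesis
    unfolding hessian_bliss_profile(3)[OF d] S_k_id_plus_outer[OF i(1)] m_def[symmetric] t_def[symmetric]
    using outer by (simp add: \<alpha>_def mult.assoc)
qed

text \<open>The solutions \<open>u\<^sub>\<lambda>\<close>, \<open>U\<^sub>\<lambda>\<close> and \<open>u*\<close> of the theorem are \<open>bliss_sol k \<lambda> d\<close> for
  \<open>d = d\<^sub>-(\<lambda>), d\<^sub>+(\<lambda>), k\<close>.\<close>
definition bliss_sol :: "nat \<Rightarrow> real \<Rightarrow> real \<Rightarrow> real^'n::finite \<Rightarrow> real" where
  "bliss_sol k lam d x = 1 - lam powr (- (real CARD('n) - 2 * real k) / (2 * real k * (real k + 1)))
                               * (- bliss k d x)"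

lemma bliss_sol_eq_bliss_profile:
  assumes "lam > 0"
  shows "bliss_sol k lam d = (bliss_profile k (bliss_amp CARD('n) k lam d) d :: real^'n::finite \<Rightarrow> real)"
proof
  fix x :: "real^'n"
  have "- bliss k d x = (d * real (CARD('n) choose k) powr (1 / real k) * ((real CARD('n) - 2 * real k) / real k))
        powr ((real CARD('n) - 2 * real k) / (2 * (real k + 1)))
      / (1 + d * (x \<bullet> x)) powr bliss_exp CARD('n) k"
    by (simp add: bliss_def Let_def bliss_exp_def power2_norm_eq_inner)
  then show "bliss_sol k lam d x = bliss_profile k (bliss_amp CARD('n) k lam d) d x"
    by (simp add: bliss_sol_def bliss_profile_def bliss_amp_def powr_minus divide_inverse mult_ac)
qed

context
  fixes k :: nat and lam d :: real
  assumes hk: "1 \<le> k" and hn: "2 * k < CARD('n::finite)" and lam: "lam > 0" and d: "d > 0"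
begin

abbreviation (input) U :: "real^'n \<Rightarrow> real" where
  "U \<equiv> bliss_profile k (bliss_amp CARD('n) k lam d) d"

lemma C2_on_bliss_profile: "C2_on (ball 0 1) U"
  unfolding C2_on_def
proof (intro conjI allI ballI)
  show "U differentiable (at x)" "pderiv1 j U differentiable (at x)" for x j
    using hessian_bliss_profile[OF d] by blast+
  have "1 + d * (x \<bullet> x) \<noteq> 0" for x :: "real^'n"
    using d by (metis add_pos_nonneg inner_ge_zero less_irrefl zero_less_one mult_nonneg_nonneg less_imp_le)
  then show "continuous_on (ball 0 1) (\<lambda>x. hessian U x $ i $ j)" for i j
    unfolding hessian_bliss_profile(3)[OF d] id_plus_outer_def
    by (cases "i = j") (auto intro!: continuous_intros)
qed

lemma S_k_hessian_bliss_profile_nonneg: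
  assumes i: "i \<in> {1..k}"
  shows "S_k i (hessian U x) \<ge> 0"
proof -
  let ?t = "1 + d * (x \<bullet> x)"
  have t: "?t > 0"
    using d by (simp add: add_pos_nonneg)
  have "d * (x \<bullet> x) / ?t \<le> 1" "d * (x \<bullet> x) / ?t \<ge> 0"
    using t d by (simp_all add: divide_le_eq)
  moreover have "real i / real k \<le> 1"
    using i by auto
  ultimately have "(real i / real k) * (d * (x \<bullet> x) / ?t) \<le> 1 * 1"
    by (intro mult_mono) auto
  moreover have "bliss_amp CARD('n) k lam d * bliss_exp CARD('n) k * d * ?t powr (- bliss_exp CARD('n) k - 1) \<ge> 0"
    using bliss_amp_pos[OF hk hn lam d] bliss_exp_pos[OF hk hn] d by simp
  ultimately show ?thesis
    using i hn by (simp add: S_k_hessian_bliss_profile[OF hk hn d] mult.assoc)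
qed

lemma S_k_hessian_bliss_profile_eq:
  "S_k k (hessian U x) = lam * (1 - U x) powr qstar TYPE('n) k"
proof -
  let ?n = "CARD('n)" and ?t = "1 + d * (x \<bullet> x)"
  let ?c = "bliss_amp ?n k lam d" and ?m = "bliss_exp ?n k" and ?q = "crit_exp ?n k"
  have t: "?t > 0"
    using d by (simp add: add_pos_nonneg)
  have c: "?c > 0"
    by (rule bliss_amp_pos[OF hk hn lam d])
  have "S_k k (hessian U x) = (2 * ?c * ?m * d * ?t powr (- ?m - 1)) ^ k * real (?n choose k) / ?t"
    using hk hn t by (simp add: S_k_hessian_bliss_profile[OF hk hn d] field_simps)
  also have "(2 * ?c * ?m * d * ?t powr (- ?m - 1)) ^ k = (2 * ?m * d) ^ k * ?c powr real k * ?t powr ((- ?m - 1) * real k)"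
    using t c by (simp add: power_mult_distrib powr_realpow[symmetric] powr_powr mult_ac)
  also have "\<dots> * real (?n choose k) / ?t = real (?n choose k) * (2 * ?m * d) ^ k * ?c powr real k * ?t powr ((- ?m - 1) * real k - 1)"
    using t by (simp add: powr_diff)
  also have "real (?n choose k) * (2 * ?m * d) ^ k = lam * ?c powr (?q - real k)"
    by (rule bliss_amp_powr_crit_exp[OF hk hn lam d, symmetric])
  also have "lam * ?c powr (?q - real k) * ?c powr real k * ?t powr ((- ?m - 1) * real k - 1)
      = lam * (?c * ?t powr (- ?m)) powr ?q"
  proof -
    have "(- ?m - 1) * real k - 1 = - ?m * ?q"
      using bliss_exp_mult_crit_exp[OF hk hn] by (simp add: algebra_simps)
    then show ?thesis
      using c t by (simp add: powr_mult powr_powr powr_add[symmetric])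
  qed
  also have "?c * ?t powr (- ?m) = 1 - U x"
    by (simp add: bliss_profile_def)
  also have "?q = qstar TYPE('n) k"
    by (simp add: qstar_def crit_exp_def)
  finally show ?thesis .
qed

lemma bliss_profile_boundary_iff:
  "(\<forall>x\<in>sphere 0 1. U x = 0) \<longleftrightarrow>
     lam * (d + 1) ^ (k + 1) - real (CARD('n) choose k) * ((real CARD('n) - 2 * real k) / real k) ^ k * d ^ k = 0"
proof -
  obtain e :: "real^'n" where e: "e \<in> sphere 0 1"
    using vector_choose_size[of 1] by auto
  have "U x = 1 - bliss_amp CARD('n) k lam d * (1 + d) powr (- bliss_exp CARD('n) k)" if "x \<in> sphere 0 1" for x
    using that by (simp add: bliss_profile_radial)
  then have "(\<forall>x\<in>sphere 0 1. U x = 0) \<longleftrightarrow> bliss_amp CARD('n) k lam d = (1 + d) powr bliss_exp CARD('n) k"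
    using e d by (auto simp: powr_minus field_simps)
  then show ?thesis
    by (simp add: bliss_amp_eq_iff[OF hk hn lam d])
qed

lemma is_solution_bliss_profile:
  assumes root: "lam * (d + 1) ^ (k + 1) - real (CARD('n) choose k) * ((real CARD('n) - 2 * real k) / real k) ^ k * d ^ k = 0"
  shows "is_solution k lam U" "radial U"
proof -
  let ?c = "bliss_amp CARD('n) k lam d" and ?m = "bliss_exp CARD('n) k"
  have bdry: "?c * (1 + d) powr (- ?m) = 1"
    using bliss_amp_eq_iff[OF hk hn lam d] root d by (simp add: powr_minus field_simps)
  have "U x < 0" if "x \<in> ball 0 1" for x
  proof -
    have "1 + d * (norm x)\<^sup>2 < 1 + d"
      using that d by (simp add: power_less_one_iff)
    then have "(1 + d) powr (- ?m) < (1 + d * (norm x)\<^sup>2) powr (- ?m)"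
      using bliss_exp_pos[OF hk hn] d by (intro powr_less_mono2_neg) (auto simp: add_pos_nonneg)
    from mult_strict_left_mono[OF this bliss_amp_pos[OF hk hn lam d]]
    show ?thesis
      using bdry by (simp add: bliss_profile_radial)
  qed
  moreover have "continuous_on (cball 0 1) U"
    using hessian_bliss_profile(1)[OF d]
    by (intro continuous_at_imp_continuous_on ballI differentiable_imp_continuous_within)
  ultimately show "is_solution k lam U"
    unfolding is_solution_def
    using C2_on_bliss_profile S_k_hessian_bliss_profile_nonneg S_k_hessian_bliss_profile_eq
      bliss_profile_boundary_iff root by auto
  show "radial U"
    unfolding radial_def by (auto simp: bliss_profile_radial)
qed

end

section \<open>Roots of the boundary condition\<close>

definition root_ratio :: "nat \<Rightarrow> real \<Rightarrow> real" where
  "root_ratio k d = d ^ k / (d + 1) ^ (k + 1)"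

context
  fixes k :: nat
  assumes hk: "1 \<le> k"
begin

lemma has_real_derivative_root_ratio:
  assumes d: "d > 0"
  shows "(root_ratio k has_real_derivative
           d ^ (k - 1) * (d + 1) ^ k * (real k - d) / ((d + 1) ^ (k + 1))\<^sup>2) (at d)"
proof -
  have "((\<lambda>x. (x + 1) ^ (k + 1)) has_real_derivative real (k + 1) * (d + 1) ^ k) (at d)"
    using DERIV_power[where n = "k + 1", OF DERIV_add[OF DERIV_ident DERIV_const[of 1]]] by simp
  moreover have "(d + 1) ^ (k + 1) \<noteq> 0"
    using d by simp
  ultimately have "(root_ratio k has_real_derivative
      (real k * d ^ (k - Suc 0) * (d + 1) ^ (k + 1) - real (k + 1) * (d + 1) ^ k * d ^ k)
        / ((d + 1) ^ (k + 1) * (d + 1) ^ (k + 1))) (at d)"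
    unfolding root_ratio_def[abs_def]
    by (rule DERIV_cong[OF DERIV_divide[OF DERIV_pow[of k d]]]) (simp add: mult_ac)
  moreover obtain j where "k = Suc j"
    using hk by (cases k) auto
  then have "real k * d ^ (k - Suc 0) * (d + 1) ^ (k + 1) - real (k + 1) * (d + 1) ^ k * d ^ k
      = d ^ (k - 1) * (d + 1) ^ k * (real k - d)"
    by (simp add: algebra_simps)
  ultimately show ?thesis
    by (simp add: power2_eq_square)
qed

lemma continuous_on_root_ratio: "0 \<le> a \<Longrightarrow> continuous_on {a..b} (root_ratio k)"
  unfolding root_ratio_def by (intro continuous_intros) auto

lemma root_ratio_strict_mono_below:
  assumes "0 \<le> a" "a < b" "b \<le> real k"
  shows "root_ratio k a < root_ratio k b"
proof (rule DERIV_pos_imp_increasing_open[OF assms(2)])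
  fix x
  assume "a < x" "x < b"
  then have x: "x > 0" "x < real k"
    using assms by auto
  then have "x ^ (k - 1) * (x + 1) ^ k * (real k - x) / ((x + 1) ^ (k + 1))\<^sup>2 > 0"
    by simp
  then show "\<exists>y. (root_ratio k has_real_derivative y) (at x) \<and> y > 0"
    using has_real_derivative_root_ratio[OF x(1)] by blast
qed (use assms in \<open>auto intro: continuous_on_root_ratio\<close>)

lemma root_ratio_strict_antimono_above:
  assumes "real k \<le> a" "a < b"
  shows "root_ratio k b < root_ratio k a"
proof (rule DERIV_neg_imp_decreasing_open[OF assms(2)])
  fix x
  assume "a < x" "x < b"
  then have x: "x > 0" "x > real k"
    using hk assms by auto
  then have "x ^ (k - 1) * (x + 1) ^ k * (real k - x) / ((x + 1) ^ (k + 1))\<^sup>2 < 0"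
    by (simp add: mult_pos_neg divide_neg_pos)
  then show "\<exists>y. (root_ratio k has_real_derivative y) (at x) \<and> y < 0"
    using has_real_derivative_root_ratio[OF x(1)] by blast
qed (use hk assms in \<open>auto intro: continuous_on_root_ratio\<close>)

lemma root_ratio_le:
  assumes d: "d > 0"
  shows "root_ratio k d \<le> 1 / (d + 1)"
proof -
  have "d ^ k \<le> (d + 1) ^ k"
    using d by (intro power_mono) auto
  then have "d ^ k / (d + 1) ^ (k + 1) \<le> (d + 1) ^ k / (d + 1) ^ (k + 1)"
    using d by (intro divide_right_mono) auto
  also have "\<dots> = 1 / (d + 1)"
  proof -
    have "(d + 1) ^ (k + 1) = (d + 1) ^ k * (d + 1)"
      by simp
    then show ?thesis
      using d by (simp del: power_Suc)
  qed
  finally show ?thesis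
    by (simp add: root_ratio_def)
qed

lemma positive_roots_eq:
  "{d. d > 0 \<and> lam * (d + 1) ^ (k + 1) - C * d ^ k = 0} = {d. d > 0 \<and> C * root_ratio k d = lam}"
proof -
  have "lam * (d + 1) ^ (k + 1) - C * d ^ k = 0 \<longleftrightarrow> C * root_ratio k d = lam" if "d > 0" for d
  proof -
    have "(d + 1) ^ (k + 1) > 0"
      using that by simp
    then show ?thesis
      by (auto simp: root_ratio_def field_simps)
  qed
  then show ?thesis
    by blast
qed

lemma root_ratio_less_max: "0 \<le> d \<Longrightarrow> d \<noteq> real k \<Longrightarrow> root_ratio k d < root_ratio k (real k)"
  using root_ratio_strict_mono_below[of d "real k"] root_ratio_strict_antimono_above[of "real k" d]
  by (cases "d < real k") auto

lemma root_ratio_eqD: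
  assumes "0 \<le> d" "0 \<le> d'" "root_ratio k d = root_ratio k d'" "d \<le> real k \<longleftrightarrow> d' \<le> real k"
  shows "d = d'"
proof (rule ccontr)
  assume "d \<noteq> d'"
  then show False
    using assms root_ratio_strict_mono_below[of d d'] root_ratio_strict_mono_below[of d' d]
      root_ratio_strict_antimono_above[of d d'] root_ratio_strict_antimono_above[of d' d]
    by (cases "d < d'"; cases "d \<le> real k") auto
qed

lemma root_ratio_attains_below:
  assumes "0 < v" "v < root_ratio k (real k)"
  obtains d where "0 < d" "d < real k" "root_ratio k d = v"
proof -
  have "root_ratio k 0 = 0"
    using hk by (simp add: root_ratio_def)
  then obtain d where "0 \<le> d" "d \<le> real k" "root_ratio k d = v"
    using IVT'[of "root_ratio k" 0 v "real k"] continuous_on_root_ratio[of 0 "real k"] assms by auto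
  moreover have "d \<noteq> 0" "d \<noteq> real k"
    using assms \<open>root_ratio k 0 = 0\<close> calculation(3) by auto
  ultimately have "0 < d" "d < real k" "root_ratio k d = v"
    by simp_all
  with that show ?thesis
    by blast
qed

lemma root_ratio_attains_above:
  assumes v: "0 < v" "v < root_ratio k (real k)"
  obtains d where "real k < d" "root_ratio k d = v"
proof -
  define B where "B = max (real k + 1) (1 / v)"
  have B: "B > real k" "B > 0"
    by (auto simp: B_def intro: le_less_trans[OF of_nat_0_le_iff])
  have "root_ratio k B \<le> 1 / (B + 1)"
    using root_ratio_le B by simp
  also have "\<dots> < v"
    using v B by (simp add: B_def field_simps max_def split: if_splits)
  finally obtain d where "real k \<le> d" "d \<le> B" "root_ratio k d = v"
    using IVT2'[of "root_ratio k" B v "real k"] continuous_on_root_ratio[of "real k" B] v B by auto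
  moreover have "d \<noteq> real k"
    using v calculation(3) by auto
  ultimately have "real k < d" "root_ratio k d = v"
    by simp_all
  with that show ?thesis
    by blast
qed

lemma two_positive_roots:
  assumes lam: "0 < lam" "lam < C * root_ratio k (real k)" and C: "C > 0"
  obtains dm dp where "0 < dm" "dm < dp"
    and "{d. d > 0 \<and> lam * (d + 1) ^ (k + 1) - C * d ^ k = 0} = {dm, dp}"
proof -
  have v: "0 < lam / C" "lam / C < root_ratio k (real k)"
    using lam C by (auto simp: field_simps)
  obtain dm where dm: "0 < dm" "dm < real k" "root_ratio k dm = lam / C"
    using root_ratio_attains_below[OF v] by blast
  obtain dp where dp: "real k < dp" "root_ratio k dp = lam / C"
    using root_ratio_attains_above[OF v] by blast
  have "{d. d > 0 \<and> C * root_ratio k d = lam} = {dm, dp}"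
  proof (intro set_eqI iffI)
    fix d
    assume "d \<in> {d. d > 0 \<and> C * root_ratio k d = lam}"
    then have "d > 0" "root_ratio k d = lam / C"
      using C by (auto simp: field_simps)
    then show "d \<in> {dm, dp}"
      using root_ratio_eqD[of d dm] root_ratio_eqD[of d dp] dm dp by (cases "d \<le> real k") auto
  qed (use dm dp C hk in \<open>auto simp: field_simps\<close>)
  then have roots: "{d. d > 0 \<and> lam * (d + 1) ^ (k + 1) - C * d ^ k = 0} = {dm, dp}"
    unfolding positive_roots_eq .
  show ?thesis
    by (rule that[OF _ _ roots]) (use dm dp in auto)
qed

lemma one_positive_root:
  assumes "C > 0"
  shows "{d. d > 0 \<and> C * root_ratio k (real k) * (d + 1) ^ (k + 1) - C * d ^ k = 0} = {real k}"
proof -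
  have "C * root_ratio k d = C * root_ratio k (real k) \<longleftrightarrow> d = real k" if "d > 0" for d
    using assms root_ratio_less_max[of d] that by (cases "d = real k") auto
  then show ?thesis
    unfolding positive_roots_eq using hk by auto
qed

end

section \<open>Classification of the radial solutions\<close>

lemma radial_ode_bliss_profile:
  assumes hk: "1 \<le> k" and hn: "2 * k < CARD('n::finite)" and lam: "lam > 0" and d: "d > 0"
  defines "c \<equiv> bliss_amp CARD('n) k lam d" and "m \<equiv> bliss_exp CARD('n) k"
  shows "\<exists>\<psi>' \<psi>''. radial_ode CARD('n) k lam (qstar TYPE('n) k) (\<lambda>t. 1 - c * (1 + d * t\<^sup>2) powr (- m)) \<psi>' \<psi>''"
proof (rule radial_ode_of_radial[OF hk])
  let ?U = "bliss_profile k c d :: real^'n \<Rightarrow> real"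
  have c: "c > 0" and m: "m > 0"
    using bliss_amp_pos[OF hk hn lam d] bliss_exp_pos[OF hk hn] by (simp_all add: c_def m_def)
  show "C2_on (ball 0 1) ?U" "\<forall>x\<in>ball 0 1. S_k k (hessian ?U x) = lam * (1 - ?U x) powr qstar TYPE('n) k"
    using C2_on_bliss_profile[OF hk hn lam d] S_k_hessian_bliss_profile_eq[OF hk hn lam d] by (simp_all add: c_def)
  show "continuous_on (cball 0 1) ?U"
    using hessian_bliss_profile(1)[OF d]
    by (intro continuous_at_imp_continuous_on ballI differentiable_imp_continuous_within)
  show "\<forall>x\<in>cball 0 1. ?U x = 1 - c * (1 + d * (norm x)\<^sup>2) powr (- m)"
    by (simp add: bliss_profile_radial m_def)
  have "1 + d * t\<^sup>2 \<noteq> 0" for t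
    using d by (metis add_pos_nonneg less_irrefl mult_nonneg_nonneg zero_le_power2 zero_less_one less_imp_le)
  then show "\<forall>t\<in>{0..1}. 1 - c * (1 + d * t\<^sup>2) powr (- m) < 1"
    using c by simp
  have "(1 + d) powr (- m) < 1 powr (- m)"
    using m d by (intro powr_less_mono2_neg) auto
  then show "1 - c * (1 + d * 0\<^sup>2) powr (- m) < 1 - c * (1 + d * 1\<^sup>2) powr (- m)"
    using c by simp
qed

lemma radial_solution_profile:
  fixes u :: "real^'n::finite \<Rightarrow> real"
  assumes sol: "is_solution k lam u" and u: "\<forall>x\<in>cball 0 1. u x = \<phi> (norm x)"
  shows "\<phi> 0 < 0" "\<phi> 1 = 0" "\<forall>t\<in>{0..1}. \<phi> t < 1"
proof -
  obtain e :: "real^'n" where e: "norm e = 1"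
    using vector_choose_size[of 1] by auto
  have \<phi>_eq: "\<phi> t = u (t *\<^sub>R e)" if "t \<in> {0..1}" for t
    using u that e by auto
  have neg: "\<forall>x\<in>ball 0 1. u x < 0" and bdry: "\<forall>x\<in>sphere 0 1. u x = 0"
    using sol unfolding is_solution_def by auto
  show "\<phi> 0 < 0"
    using \<phi>_eq[of 0] neg by simp
  show \<phi>1: "\<phi> 1 = 0"
    using \<phi>_eq[of 1] bdry e by simp
  show "\<forall>t\<in>{0..1}. \<phi> t < 1"
  proof
    fix t :: real
    assume t: "t \<in> {0..1}"
    show "\<phi> t < 1"
    proof (cases "t = 1")
      case False
      then have "t *\<^sub>R e \<in> ball 0 1"
        using t e by simp
      then show ?thesis
        using \<phi>_eq[OF t] neg by fastforce
    qed (simp add: \<phi>1)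
  qed
qed

text \<open>A radial solution and the Bliss profile with the same value at the origin solve the same
  singular initial value problem, hence coincide; the boundary condition then says that \<open>d\<close> is a
  root.\<close>
lemma radial_solution_eq_bliss_profile:
  fixes u :: "real^'n::finite \<Rightarrow> real"
  assumes hk: "1 \<le> k" and hn: "2 * k < CARD('n)" and lam: "lam > 0"
    and sol: "is_solution k lam u" and rad: "radial u"
  obtains d where "d > 0"
    and "lam * (d + 1) ^ (k + 1) - real (CARD('n) choose k) * ((real CARD('n) - 2 * real k) / real k) ^ k * d ^ k = 0"
    and "\<forall>x\<in>cball 0 1. u x = bliss_profile k (bliss_amp CARD('n) k lam d) d x"
proof -
  obtain \<phi> where \<phi>: "\<forall>x\<in>cball 0 1. u x = \<phi> (norm x)"
    using rad unfolding radial_def by blast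
  note \<phi>0 = radial_solution_profile(1)[OF sol \<phi>] and \<phi>1 = radial_solution_profile(2)[OF sol \<phi>]
    and lt1 = radial_solution_profile(3)[OF sol \<phi>]
  have C2: "C2_on (ball 0 1) u" and cont: "continuous_on (cball 0 1) u"
    and eq: "\<forall>x\<in>ball 0 1. S_k k (hessian u x) = lam * (1 - u x) powr qstar TYPE('n) k"
    using sol unfolding is_solution_def by auto
  obtain \<phi>' \<phi>'' where ode_\<phi>: "radial_ode CARD('n) k lam (qstar TYPE('n) k) \<phi> \<phi>' \<phi>''"
    using radial_ode_of_radial[OF hk C2 cont eq \<phi> lt1] \<phi>0 \<phi>1 by auto
  obtain d where d: "d > 0" "bliss_amp CARD('n) k lam d = 1 - \<phi> 0"
    using bliss_amp_surj[OF hk hn lam, of "1 - \<phi> 0"] \<phi>0 by auto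
  let ?U = "bliss_profile k (bliss_amp CARD('n) k lam d) d :: real^'n \<Rightarrow> real"
  define \<psi> where "\<psi> t = 1 - bliss_amp CARD('n) k lam d * (1 + d * t\<^sup>2) powr (- bliss_exp CARD('n) k)" for t
  obtain \<psi>' \<psi>'' where ode_\<psi>: "radial_ode CARD('n) k lam (qstar TYPE('n) k) \<psi> \<psi>' \<psi>''"
    using radial_ode_bliss_profile[OF hk hn lam d(1)] unfolding \<psi>_def by blast
  have "qstar TYPE('n) k \<ge> 0"
    using crit_exp_minus_k_pos[OF hk hn] by (simp add: qstar_def crit_exp_def)
  then have "\<forall>t\<in>{0..1}. \<phi> t = \<psi> t"
    using hn d(2) by (intro radial_ode_unique[OF ode_\<phi> ode_\<psi> hk _ lam]) (simp_all add: \<psi>_def)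
  then have u_eq: "\<forall>x\<in>cball 0 1. u x = ?U x"
    using \<phi> by (simp add: bliss_profile_radial \<psi>_def)
  moreover have "\<forall>x\<in>sphere 0 1. u x = 0"
    using sol unfolding is_solution_def by blast
  ultimately have "\<forall>x\<in>sphere 0 1. ?U x = 0"
    by auto
  then show ?thesis
    using that d(1) u_eq bliss_profile_boundary_iff[OF hk hn lam d(1)] by blast
qed

lemma bliss_sol_eq_ratio_powr:
  fixes x :: "real^'n::finite"
  assumes lam: "lam > 0" and d: "d > 0"
    and amp: "bliss_amp CARD('n) k lam d = (1 + d) powr bliss_exp CARD('n) k"
  shows "bliss_sol k lam d x = 1 - ((1 + d) / (1 + d * (norm x)\<^sup>2)) powr bliss_exp CARD('n) k"
proof -
  have "1 + d * (norm x)\<^sup>2 > 0"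
    using d by (simp add: add_pos_nonneg)
  then show ?thesis
    using d by (simp add: bliss_sol_eq_bliss_profile[OF lam] bliss_profile_radial amp powr_minus_divide
        powr_divide)
qed

lemma is_solution_bliss_sol:
  assumes hk: "1 \<le> k" and hn: "2 * k < CARD('n::finite)" and lam: "lam > 0" and d: "d > 0"
    and root: "lam * (d + 1) ^ (k + 1) - real (CARD('n) choose k) * ((real CARD('n) - 2 * real k) / real k) ^ k * d ^ k = 0"
  shows "is_solution k lam (bliss_sol k lam d :: real^'n \<Rightarrow> real) \<and> radial (bliss_sol k lam d :: real^'n \<Rightarrow> real)"
  using is_solution_bliss_profile[OF hk hn lam d root] by (simp add: bliss_sol_eq_bliss_profile[OF lam])

lemma radial_solution_eq_bliss_sol:
  fixes u :: "real^'n::finite \<Rightarrow> real"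
  assumes hk: "1 \<le> k" and hn: "2 * k < CARD('n)" and lam: "lam > 0"
    and "is_solution k lam u" "radial u"
  obtains d where "d \<in> {d. d > 0 \<and> lam * (d + 1) ^ (k + 1)
      - real (CARD('n) choose k) * ((real CARD('n) - 2 * real k) / real k) ^ k * d ^ k = 0}"
    and "\<forall>x\<in>cball 0 1. u x = bliss_sol k lam d x"
proof -
  obtain d where "d > 0"
    and "lam * (d + 1) ^ (k + 1) - real (CARD('n) choose k) * ((real CARD('n) - 2 * real k) / real k) ^ k * d ^ k = 0"
    and "\<forall>x\<in>cball 0 1. u x = bliss_profile k (bliss_amp CARD('n) k lam d) d x"
    using radial_solution_eq_bliss_profile[OF assms] .
  then show ?thesis
    using that by (simp add: bliss_sol_eq_bliss_profile[OF lam])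
qed

lemma mustar_eq_root_ratio:
  "mustar TYPE('n::finite) k
     = real (CARD('n) choose k) * ((real CARD('n) - 2 * real k) / real k) ^ k * root_ratio k (real k)"
  by (simp add: mustar_def root_ratio_def)

lemma two_radial_solutions_below_mustar:
  assumes hk: "1 \<le> k" and hn: "2 * k < CARD('n::finite)" and lam: "0 < lam" "lam < mustar TYPE('n) k"
  shows "\<exists>dm dp. 0 < dm \<and> dm < dp \<and>
           {d. d > 0 \<and> lam * (d + 1) ^ (k + 1)
              - real (CARD('n) choose k) * ((real CARD('n) - 2 * real k) / real k) ^ k * d ^ k = 0}
            = {dm, dp} \<and>
           is_solution k lam (bliss_sol k lam dm :: real^'n \<Rightarrow> real) \<and> radial (bliss_sol k lam dm :: real^'n \<Rightarrow> real) \<and>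
           is_solution k lam (bliss_sol k lam dp :: real^'n \<Rightarrow> real) \<and> radial (bliss_sol k lam dp :: real^'n \<Rightarrow> real) \<and>
           (\<exists>x::real^'n\<in>ball 0 1. bliss_sol k lam dm x \<noteq> bliss_sol k lam dp x) \<and>
           (\<forall>u::real^'n \<Rightarrow> real. is_solution k lam u \<and> radial u \<longrightarrow>
              (\<forall>x\<in>cball 0 1. u x = bliss_sol k lam dm x) \<or> (\<forall>x\<in>cball 0 1. u x = bliss_sol k lam dp x))"
proof -
  let ?C = "real (CARD('n) choose k) * ((real CARD('n) - 2 * real k) / real k) ^ k"
  have C: "?C > 0"
    using hk hn by simp
  have "lam < ?C * root_ratio k (real k)"
    using lam(2) by (simp add: mustar_eq_root_ratio)
  then obtain dm dp where dmp: "0 < dm" "dm < dp"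
    and roots: "{d. d > 0 \<and> lam * (d + 1) ^ (k + 1) - ?C * d ^ k = 0} = {dm, dp}"
    using two_positive_roots[OF hk lam(1) _ C] by blast
  have "bliss_sol k lam dm (0::real^'n) \<noteq> bliss_sol k lam dp (0::real^'n)"
    using bliss_amp_strict_mono[OF hk hn lam(1) dmp]
    by (simp add: bliss_sol_eq_bliss_profile[OF lam(1)] bliss_profile_def)
  then have distinct: "\<exists>x::real^'n\<in>ball 0 1. bliss_sol k lam dm x \<noteq> bliss_sol k lam dp x"
    by (intro bexI[of _ 0]) auto
  have unique: "(\<forall>x\<in>cball 0 1. u x = bliss_sol k lam dm x) \<or> (\<forall>x\<in>cball 0 1. u x = bliss_sol k lam dp x)"
    if sol: "is_solution k lam u" and rad: "radial (u :: real^'n \<Rightarrow> real)" for u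
  proof -
    obtain d where "d \<in> {d. d > 0 \<and> lam * (d + 1) ^ (k + 1) - ?C * d ^ k = 0}"
      and u: "\<forall>x\<in>cball 0 1. u x = bliss_sol k lam d x"
      using radial_solution_eq_bliss_sol[OF hk hn lam(1) sol rad] .
    then have "d \<in> {dm, dp}"
      unfolding roots by blast
    then show ?thesis
      using u by auto
  qed
  have "lam * (d + 1) ^ (k + 1) - ?C * d ^ k = 0" if "d \<in> {dm, dp}" for d
    using that unfolding roots[symmetric] by blast
  then have sol: "is_solution k lam (bliss_sol k lam d :: real^'n \<Rightarrow> real)"
    "radial (bliss_sol k lam d :: real^'n \<Rightarrow> real)" if "d \<in> {dm, dp}" for d
    using that dmp is_solution_bliss_sol[OF hk hn lam(1)] by auto
  show ?thesis
  proof (rule exI[of _ dm], rule exI[of _ dp], intro conjI)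
    show "\<forall>u::real^'n \<Rightarrow> real. is_solution k lam u \<and> radial u \<longrightarrow>
        (\<forall>x\<in>cball 0 1. u x = bliss_sol k lam dm x) \<or> (\<forall>x\<in>cball 0 1. u x = bliss_sol k lam dp x)"
      using unique by blast
  qed (use dmp roots distinct sol in simp_all)
qed

lemma unique_radial_solution_at_mustar:
  assumes hk: "1 \<le> k" and hn: "2 * k < CARD('n::finite)"
  defines "lam \<equiv> mustar TYPE('n) k"
  shows "is_solution k lam (bliss_sol k lam (real k) :: real^'n \<Rightarrow> real)
    \<and> radial (bliss_sol k lam (real k) :: real^'n \<Rightarrow> real)
    \<and> (\<forall>x::real^'n\<in>ball 0 1. bliss_sol k lam (real k) x
          = 1 - ((1 + real k) / (1 + real k * (norm x)\<^sup>2)) powr ((real CARD('n) - 2 * real k) / (2 * real k)))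
    \<and> (\<forall>u::real^'n \<Rightarrow> real. is_solution k lam u \<and> radial u \<longrightarrow>
          (\<forall>x\<in>cball 0 1. u x = bliss_sol k lam (real k) x))"
proof -
  let ?C = "real (CARD('n) choose k) * ((real CARD('n) - 2 * real k) / real k) ^ k"
  have k: "real k > 0"
    using hk by simp
  have lam0: "lam > 0"
    using hk hn by (simp add: lam_def mustar_def)
  have roots: "{d. d > 0 \<and> lam * (d + 1) ^ (k + 1) - ?C * d ^ k = 0} = {real k}"
  proof -
    have "lam = ?C * root_ratio k (real k)"
      by (simp add: lam_def mustar_eq_root_ratio)
    then show ?thesis
      using one_positive_root[OF hk, of ?C] hk hn by simp
  qed
  then have root: "lam * (real k + 1) ^ (k + 1) - ?C * real k ^ k = 0"
    by blast
  have unique: "\<forall>x\<in>cball 0 1. u x = bliss_sol k lam (real k) x"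
    if sol: "is_solution k lam u" and rad: "radial (u :: real^'n \<Rightarrow> real)" for u
  proof -
    obtain d where "d \<in> {d. d > 0 \<and> lam * (d + 1) ^ (k + 1) - ?C * d ^ k = 0}"
      and u: "\<forall>x\<in>cball 0 1. u x = bliss_sol k lam d x"
      using radial_solution_eq_bliss_sol[OF hk hn lam0 sol rad] .
    then have "d \<in> {real k}"
      unfolding roots by blast
    then show ?thesis
      using u by auto
  qed
  show ?thesis
  proof (intro conjI allI impI ballI)
    show "is_solution k lam (bliss_sol k lam (real k) :: real^'n \<Rightarrow> real)"
      "radial (bliss_sol k lam (real k) :: real^'n \<Rightarrow> real)"
      using is_solution_bliss_sol[OF hk hn lam0 k root] by auto
    show "bliss_sol k lam (real k) x
      = 1 - ((1 + real k) / (1 + real k * (norm x)\<^sup>2)) powr ((real CARD('n) - 2 * real k) / (2 * real k))"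
      for x :: "real^'n"
      using bliss_amp_eq_iff[OF hk hn lam0 k] root
      by (simp add: bliss_sol_eq_ratio_powr[OF lam0 k] bliss_exp_def)
    show "u x = bliss_sol k lam (real k) x"
      if "is_solution k lam u \<and> radial u" "x \<in> cball 0 1" for u :: "real^'n \<Rightarrow> real" and x
      using unique that by blast
  qed
qed

theorem theorem2:
  fixes k :: nat and lam :: real
  assumes hk: "k \<ge> 1"
    and hn: "CARD('n::finite) > 2 * k"
  shows
    "(0 < lam \<and> lam < mustar TYPE('n) k \<longrightarrow>
       (\<exists>dm dp. 0 < dm \<and> dm < dp \<and>
          {d::real. d > 0 \<and> lam * (d + 1) ^ (k + 1)
              - real (CARD('n) choose k) * ((real CARD('n) - 2 * real k) / real k) ^ k * d ^ k = 0}
            = {dm, dp} \<and>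
          (let ul = (\<lambda>x::real^'n. 1 - lam powr (- (real CARD('n) - 2 * real k) / (2 * real k * (real k + 1)))
                                     * (- bliss k dm x));
               Ul = (\<lambda>x::real^'n. 1 - lam powr (- (real CARD('n) - 2 * real k) / (2 * real k * (real k + 1)))
                                     * (- bliss k dp x))
           in is_solution k lam ul \<and> radial ul \<and>
              is_solution k lam Ul \<and> radial Ul \<and>
              (\<exists>x\<in>ball 0 1. ul x \<noteq> Ul x) \<and>
              (\<forall>u. is_solution k lam u \<and> radial u \<longrightarrow>
                   (\<forall>x\<in>cball 0 1. u x = ul x) \<or> (\<forall>x\<in>cball 0 1. u x = Ul x)))))
     \<and>
     (lam = mustar TYPE('n) k \<longrightarrow>
       (let us = (\<lambda>x::real^'n. 1 - (mustar TYPE('n) k) powr (- (real CARD('n) - 2 * real k) / (2 * real k * (real k + 1)))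
                                   * (- bliss k (real k) x))
        in is_solution k lam us \<and> radial us \<and>
           (\<forall>x\<in>ball 0 1. us x = 1 - ((1 + real k) / (1 + real k * (norm x)^2))
                                           powr ((real CARD('n) - 2 * real k) / (2 * real k))) \<and>
           (\<forall>u. is_solution k lam u \<and> radial u \<longrightarrow> (\<forall>x\<in>cball 0 1. u x = us x))))"
proof -
  have "2 * k < CARD('n)"
    using hn by simp
  then show ?thesis
    unfolding Let_def bliss_sol_def[symmetric]
    using two_radial_solutions_below_mustar[OF hk] unique_radial_solution_at_mustar[OF hk] by blast
qed

end
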